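(* Consider three unit point masses in $\mathbb{R}^2$ with positions $q_i=(x_i,z_i)$, configuration space $Q=\{q\in\mathbb{R}^6: q_i\neq q_j\ (i\neq j)\}$, total potential $U=\frac{\kappa_s}{2}\sum_{k}(\ell_k-\bar\ell_k)^2+\kappa_{\mathrm{np}}\sum_i\chi(z_i)+\sum_i z_i$ with reduced potential $\hat U$ on $Q/\mathbb{R}$, and total Rayleigh dissipation function $R=R_{\mathrm{shape}}+R_{\mathrm{ns}}+R_{\mathrm{db}}$ on $TQ$ given by $$R_{\mathrm{shape}}=\frac{\nu_s}{2}\sum_{k=1}^3\dot\ell_k^2,\quad R_{\mathrm{ns}}=-\frac{\nu_{\mathrm{ns}}}{2}\sum_{i=1}^3\chi'(z_i)\dot x_i^2,\quad R_{\mathrm{db}}=\frac{\nu_{\mathrm{db}}}{2}\sum_{i=1}^3\chi(z_i)\dot z_i^2,$$ with $\nu_s,\nu_{\mathrm{ns}},\nu_{\mathrm{db}}>0$. Assume the rest lengths $\bar\ell_1,\bar\ell_2,\bar\ell_3$ form a non-degenerate triangle and $\kappa_s,\kappa_{\mathrm{np}}>0$ are sufficiently large. Then there is a non-degenerate local minimum $\hat q_*$ of $\hat U$ (positive definite Hessian) such that $R(q,\cdot)$ is a positive definite quadratic form on $T_qQ$ for every $q\in Q$ with $\pi(q)=\hat q_*$ (i.e. on the fiber of $TQ/\mathbb{R}$ above $\hat q_*$).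
   Context: $\ell_k=\|q_i-q_j\|$ for $\{i,j,k\}=\{1,2,3\}$; $\chi(s)=\tfrac12 s^2$ for $s<0$, $0$ otherwise (so $\chi'\le0$). $\pi:Q\to Q/\mathbb{R}$ is the quotient by simultaneous translation of all $x_i$. The Rayleigh function $R$ generates the friction force via $F=-\partial R/\partial u$ (fiber derivative). $R$ is invariant under the translation action, so it is defined on the fibers of $TQ/\mathbb{R}$. *)

theory Defs
  imports "HOL-Analysis.Analysis"
begin

text \<open>A configuration is a pair (x, z) of
  vectors in real^3: q_i = (x $ i, z $ i), for i = 1, 2, 3.
  A tangent vector (velocity) at a configuration is likewise a pair (xdot, zdot).\<close>

type_synonym config = "(real^3) \<times> (real^3)"

definition pos :: "config \<Rightarrow> 3 \<Rightarrow> real \<times> real" where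
  "pos q i = (fst q $ i, snd q $ i)"

definition Qspace :: "config set" where
  "Qspace = {q. \<forall>i j. i \<noteq> j \<longrightarrow> pos q i \<noteq> pos q j}"

definition edge_ends :: "3 \<Rightarrow> 3 \<times> 3" where
  "edge_ends k = (if k = 1 then (2, 3) else if k = 2 then (1, 3) else (1, 2))"

definition ell :: "config \<Rightarrow> 3 \<Rightarrow> real" where
  "ell q k = norm (pos q (fst (edge_ends k)) - pos q (snd (edge_ends k)))"

text \<open>Time derivative of ell_k along the velocity v (derivative of the norm).\<close>
definition ell_dot :: "config \<Rightarrow> config \<Rightarrow> 3 \<Rightarrow> real" where
  "ell_dot q v k = (let (i, j) = edge_ends k in
      ((pos q i - pos q j) \<bullet> (pos v i - pos v j)) / norm (pos q i - pos q j))"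

definition chi :: "real \<Rightarrow> real" where
  "chi s = (if s < 0 then s^2 / 2 else 0)"

definition U :: "real \<Rightarrow> real \<Rightarrow> (3 \<Rightarrow> real) \<Rightarrow> config \<Rightarrow> real" where
  "U \<kappa>s \<kappa>np lbar q =
     \<kappa>s / 2 * (\<Sum>k\<in>UNIV. (ell q k - lbar k)^2)
     + \<kappa>np * (\<Sum>i\<in>UNIV. chi (snd q $ i))
     + (\<Sum>i\<in>UNIV. snd q $ i)"

definition R_shape :: "real \<Rightarrow> config \<Rightarrow> config \<Rightarrow> real" where
  "R_shape \<nu>s q v = \<nu>s / 2 * (\<Sum>k\<in>UNIV. (ell_dot q v k)^2)"

definition R_ns :: "real \<Rightarrow> config \<Rightarrow> config \<Rightarrow> real" where
  "R_ns \<nu>ns q v = - \<nu>ns / 2 * (\<Sum>i\<in>UNIV. deriv chi (snd q $ i) * (fst v $ i)^2)"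

definition R_db :: "real \<Rightarrow> config \<Rightarrow> config \<Rightarrow> real" where
  "R_db \<nu>db q v = \<nu>db / 2 * (\<Sum>i\<in>UNIV. chi (snd q $ i) * (snd v $ i)^2)"

definition R_total :: "real \<Rightarrow> real \<Rightarrow> real \<Rightarrow> config \<Rightarrow> config \<Rightarrow> real" where
  "R_total \<nu>s \<nu>ns \<nu>db q v = R_shape \<nu>s q v + R_ns \<nu>ns q v + R_db \<nu>db q v"

text \<open>The quotient Q/R by simultaneous translation of the x_i, identified with an
  open subset of R^5 through the global coordinates (x_2 - x_1, x_3 - x_1, z).
  (These coordinates are constant exactly on translation orbits.)\<close>
type_synonym redconfig = "(real \<times> real) \<times> (real^3)"

definition proj :: "config \<Rightarrow> redconfig" where
  "proj q = ((fst q $ 2 - fst q $ 1, fst q $ 3 - fst q $ 1), snd q)"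

definition Qred :: "redconfig set" where
  "Qred = proj ` Qspace"

text \<open>Reduced potential: Uhat (proj q) = U q (U is translation invariant), obtained via
  the section x_1 = 0.\<close>
definition lift_section :: "redconfig \<Rightarrow> config" where
  "lift_section p = (vector [0, fst (fst p), snd (fst p)], snd p)"

definition Uhat :: "real \<Rightarrow> real \<Rightarrow> (3 \<Rightarrow> real) \<Rightarrow> redconfig \<Rightarrow> real" where
  "Uhat \<kappa>s \<kappa>np lbar p = U \<kappa>s \<kappa>np lbar (lift_section p)"

definition nondeg_local_min :: "('a::euclidean_space \<Rightarrow> real) \<Rightarrow> 'a set \<Rightarrow> 'a \<Rightarrow> bool" where
  "nondeg_local_min f D p \<longleftrightarrow> p \<in> D \<and>
     (\<exists>S g H. open S \<and> p \<in> S \<and> S \<subseteq> D \<and>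
        (\<forall>y\<in>S. (f has_derivative (\<lambda>h. g y \<bullet> h)) (at y)) \<and>
        (g has_derivative H) (at p) \<and>
        g p = 0 \<and>
        (\<forall>h. h \<noteq> 0 \<longrightarrow> h \<bullet> H h > 0) \<and>
        (\<forall>y\<in>S. f p \<le> f y))"

end

theory Submission
  imports Defs
begin

(* The equilibrium is a triangle resting on the ground with two vertices i, j pressed slightly
  into it, where the penetration penalty balances gravity, and the apex k above.  Its shape is
  a fixed point of a continuous map near the rest shape (Brouwer); for stiff springs and stiff
  ground the fixed point stays in a fixed compact neighbourhood of the rest shape, so all
  estimates are uniform.  Near the equilibrium the energy increment is bounded below by the
  squared linearised edge strains plus the squared heights of the grounded vertices, up to
  errors that are small for large stiffness; this quadratic form is positive definite because a
  triangle with two pinned heights is rigid up to horizontal translation, which the quotient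
  removes.  Quadratic growth of the reduced energy then gives a non-degenerate minimum.  The
  Rayleigh form is positive definite on the fibre since the grounded vertices carry both
  friction and damping, and the apex cannot move without stretching one of its two edges. *)

lemma UNIV_3_distinct: "distinct [i, j, k::3] \<Longrightarrow> (UNIV::3 set) = {i, j, k}"
  using exhaust_3[of i] exhaust_3[of j] exhaust_3[of k] UNIV_3 by auto

lemma cases_3_distinct: "distinct [i, j, k::3] \<Longrightarrow> v = i \<or> v = j \<or> v = k"
  using UNIV_3_distinct[of i j k] by (metis UNIV_I empty_iff insert_iff)

lemma sum_UNIV_3_distinct:
  "distinct [i, j, k::3] \<Longrightarrow> (\<Sum>v\<in>UNIV. f v) = f i + f j + (f k :: real)"
  by (simp add: UNIV_3_distinct)

lemma edge_ends_distinct: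
  "distinct [i, j, k::3] \<Longrightarrow> edge_ends k = (i, j) \<or> edge_ends k = (j, i)"
  using exhaust_3[of i] exhaust_3[of j] exhaust_3[of k] by (auto simp: edge_ends_def)

lemma edge_ends_exists:
  assumes "u \<noteq> v"
  obtains e where "edge_ends e = (u, v) \<or> edge_ends e = (v, u)"
proof -
  have "card {u, v} < card (UNIV::3 set)"
    using card_insert_le_m1[of 2 "{v}" u] by simp
  then have "\<not> UNIV \<subseteq> {u, v}"
    by (metis card_mono finite.emptyI finite_insert not_le)
  then obtain e where "e \<notin> {u, v}" by blast
  then have "distinct [u, v, e]" using assms by auto
  then show ?thesis using edge_ends_distinct that by blast
qed

definition edge_vec :: "config \<Rightarrow> 3 \<Rightarrow> real \<times> real" where
  "edge_vec q e = pos q (fst (edge_ends e)) - pos q (snd (edge_ends e))"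

lemma ell_eq_norm_edge_vec: "ell q e = norm (edge_vec q e)"
  by (simp add: ell_def edge_vec_def)

lemma ell_dot_eq: "ell_dot q v e = (edge_vec q e \<bullet> edge_vec v e) / norm (edge_vec q e)"
  by (simp add: ell_dot_def edge_vec_def case_prod_beta)

lemma inner_edge_vec_distinct:
  "distinct [i, j, k::3] \<Longrightarrow>
    edge_vec q k \<bullet> edge_vec w k = (pos q i - pos q j) \<bullet> (pos w i - pos w j)"
  using edge_ends_distinct[of i j k] unfolding edge_vec_def
  by (auto simp: inner_diff_left inner_diff_right)

lemma norm_edge_vec_distinct:
  "distinct [i, j, k::3] \<Longrightarrow> norm (edge_vec q k) = norm (pos q i - pos q j)"
  using edge_ends_distinct[of i j k] unfolding edge_vec_def by (auto simp: norm_minus_commute)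

lemma edge_vec_add: "edge_vec (q + w) e = edge_vec q e + edge_vec w e"
  by (simp add: edge_vec_def pos_def prod_eq_iff)

lemma bounded_linear_edge_vec: "bounded_linear (\<lambda>q. edge_vec q e)"
proof -
  have "linear (\<lambda>q. edge_vec q e)"
    by (intro linearI) (simp_all add: edge_vec_add edge_vec_def pos_def prod_eq_iff algebra_simps)
  then show ?thesis by (simp add: linear_conv_bounded_linear)
qed

lemma bounded_linear_snd_component: "bounded_linear (\<lambda>q :: 'a::euclidean_space \<times> (real^'n). snd q $ v)"
proof -
  have "linear (\<lambda>q :: 'a \<times> (real^'n). snd q $ v)" by (intro linearI) simp_all
  then show ?thesis by (simp add: linear_conv_bounded_linear)
qed

lemma norm_Pair_real: "norm (a::real, b::real) = sqrt (a\<^sup>2 + b\<^sup>2)"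
  by (simp add: norm_Pair)

lemma chi_nonneg: "chi x \<ge> 0"
  by (simp add: chi_def)

lemma chi_remainder_bounds:
  "0 \<le> chi (z + h) - chi z - min z 0 * h \<and> chi (z + h) - chi z - min z 0 * h \<le> h\<^sup>2 / 2"
proof (cases "z < 0"; cases "z + h < 0")
  assume "z < 0" "z + h < 0"
  then show ?thesis by (simp add: chi_def power2_eq_square algebra_simps)
next
  assume *: "z < 0" "\<not> z + h < 0"
  have "z * (h + z / 2) \<le> 0" using * by (intro mult_nonpos_nonneg) auto
  moreover have "0 \<le> (h + z)\<^sup>2" by simp
  ultimately show ?thesis using * by (simp add: chi_def power2_eq_square algebra_simps)
next
  assume *: "\<not> z < 0" "z + h < 0"
  have "0 \<le> z * (- 2 * h - z)" using * by simp
  moreover have "0 \<le> (h + z)\<^sup>2" by simp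
  ultimately show ?thesis using * by (simp add: chi_def power2_eq_square algebra_simps)
next
  assume "\<not> z < 0" "\<not> z + h < 0"
  then show ?thesis by (simp add: chi_def)
qed

lemma chi_remainder_neg: "z < 0 \<Longrightarrow> z + h < 0 \<Longrightarrow> chi (z + h) - chi z - min z 0 * h = h\<^sup>2 / 2"
  by (simp add: chi_def min_def field_simps power2_eq_square)

lemma has_real_derivative_of_quadratic_remainder:
  fixes f :: "real \<Rightarrow> real"
  assumes "\<And>h. \<bar>f (x + h) - f x - D * h\<bar> \<le> C * h\<^sup>2"
  shows "(f has_real_derivative D) (at x)"
proof -
  have "\<forall>\<^sub>F h in at 0. norm ((f (x + h) - f x) / h - D) \<le> C * \<bar>h\<bar>"
  proof (rule eventually_at_filter[THEN iffD2], rule always_eventually, intro allI impI)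
    fix h :: real assume "h \<noteq> 0"
    then have "(f (x + h) - f x) / h - D = (f (x + h) - f x - D * h) / h" by (simp add: field_simps)
    also have "norm \<dots> \<le> C * h\<^sup>2 / \<bar>h\<bar>"
      using assms[of h] \<open>h \<noteq> 0\<close> by (simp add: abs_div divide_right_mono)
    also have "C * h\<^sup>2 / \<bar>h\<bar> = C * \<bar>h\<bar>"
      using \<open>h \<noteq> 0\<close> by (simp add: power2_eq_square divide_simps)
    finally show "norm ((f (x + h) - f x) / h - D) \<le> C * \<bar>h\<bar>" .
  qed
  moreover have "((\<lambda>h. C * \<bar>h\<bar>) \<longlongrightarrow> 0) (at (0::real))"
    by (auto intro!: tendsto_eq_intros)
  ultimately have "((\<lambda>h. (f (x + h) - f x) / h - D) \<longlongrightarrow> 0) (at 0)"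
    by (rule Lim_null_comparison)
  then show ?thesis
    unfolding DERIV_def by (simp add: LIM_zero_iff)
qed

lemma chi_has_real_derivative: "(chi has_real_derivative min s 0) (at s)"
  using chi_remainder_bounds[of s]
  by (intro has_real_derivative_of_quadratic_remainder[where C = "1/2"]) (simp add: abs_le_iff)

lemma deriv_chi: "deriv chi s = min s 0"
  using chi_has_real_derivative by (rule DERIV_imp_deriv)

lemma norm_add_remainder_ge:
  fixes d e :: "'a::real_inner"
  assumes "d \<noteq> 0"
  shows "norm (d + e) - norm d - (d \<bullet> e) / norm d \<ge> 0"
proof -
  have nd: "norm d > 0" using assms by simp
  have "(d + e) \<bullet> d \<le> norm (d + e) * norm d" by (rule norm_cauchy_schwarz)
  moreover have "(d + e) \<bullet> d = norm d ^ 2 + d \<bullet> e"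
    using inner_add_left[of d e d] inner_commute[of e d] power2_norm_eq_inner[of d] by simp
  ultimately have "norm d ^ 2 + d \<bullet> e \<le> norm (d + e) * norm d" by simp
  then have "norm d + (d \<bullet> e) / norm d \<le> norm (d + e)" using nd
    by (simp add: field_simps power2_eq_square)
  then show ?thesis by simp
qed

lemma norm_add_remainder_le:
  fixes d e :: "'a::real_inner"
  assumes "d \<noteq> 0" "2 * norm e \<le> norm d"
  shows "norm (d + e) - norm d - (d \<bullet> e) / norm d \<le> norm e ^ 2 / norm d"
proof -
  define n where "n = norm d"
  have nd: "n > 0" using assms by (simp add: n_def)
  define a where "a = n + (d \<bullet> e) / n"
  define x where "x = norm (d + e)"
  have cs: "\<bar>d \<bullet> e\<bar> \<le> n * norm e" unfolding n_def by (rule Cauchy_Schwarz_ineq2)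
  have x2: "x^2 = n^2 + 2 * (d \<bullet> e) + norm e ^ 2"
    unfolding x_def n_def using inner_commute[of e d]
    by (simp add: power2_norm_eq_inner inner_add_left inner_add_right)
  have a2: "a^2 = n^2 + 2 * (d \<bullet> e) + (d \<bullet> e)^2 / n^2"
    unfolding a_def using nd by (simp add: field_simps power2_eq_square)
  have dif: "x^2 - a^2 \<le> norm e ^ 2" using x2 a2 by simp
  have "\<bar>(d \<bullet> e) / n\<bar> \<le> norm e"
    using cs nd by (simp add: abs_div pos_divide_le_eq mult.commute)
  then have age: "a \<ge> n / 2" using assms(2) unfolding a_def n_def by linarith
  have "norm d \<le> norm (d + e) + norm e" using norm_triangle_ineq4[of "d + e" e] by simp
  then have xge: "x \<ge> n / 2" using assms(2) unfolding x_def n_def by linarith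
  have "x - a = (x^2 - a^2) / (x + a)" using age xge nd by (simp add: field_simps power2_eq_square)
  also have "\<dots> \<le> norm e ^ 2 / (x + a)" using dif age xge nd by (simp add: divide_right_mono)
  also have "\<dots> \<le> norm e ^ 2 / n" using age xge nd by (simp add: frac_le)
  finally show ?thesis unfolding x_def a_def n_def by simp
qed

lemma slow_growth_along_nonpositive_direction:
  fixes f :: "'a::euclidean_space \<Rightarrow> real"
  assumes S: "open S" "p \<in> S"
    and der: "\<And>y. y \<in> S \<Longrightarrow> (f has_derivative (\<lambda>h. g y \<bullet> h)) (at y)"
    and H: "(g has_derivative H) (at p)" and g0: "g p = 0"
    and h: "h \<noteq> 0" "h \<bullet> H h \<le> 0" and \<epsilon>: "\<epsilon> > 0"
  obtains t where "t > 0" "p + t *\<^sub>R h \<in> S" "f (p + t *\<^sub>R h) - f p \<le> \<epsilon> * (t * norm h)\<^sup>2"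
proof -
  have lin: "linear H" using H has_derivative_linear by blast
  obtain dS where dS: "dS > 0" "ball p dS \<subseteq> S" using S openE by blast
  obtain d where d: "d > 0"
    "\<And>y. norm (y - p) < d \<Longrightarrow> norm (g y - g p - H (y - p)) \<le> \<epsilon> * norm (y - p)"
    using H \<epsilon> unfolding has_derivative_at_alt by blast
  have nh: "norm h > 0" using h by simp
  define t where "t = min dS d / (2 * norm h)"
  have t0: "t > 0" using dS d nh by (simp add: t_def)
  have inS: "p + s *\<^sub>R h \<in> S" and small: "norm ((p + s *\<^sub>R h) - p) < d"
    if "0 \<le> s" "s \<le> t" for s
  proof -
    have "norm (s *\<^sub>R h) \<le> t * norm h" using that nh by (simp add: mult_right_mono)
    also have "\<dots> = min dS d / 2" using nh by (simp add: t_def)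
    finally have le: "norm (s *\<^sub>R h) \<le> min dS d / 2" .
    then show "p + s *\<^sub>R h \<in> S" using dS d by (auto simp: dist_norm intro!: subsetD[OF dS(2)])
    show "norm ((p + s *\<^sub>R h) - p) < d" using le dS d by simp
  qed
  have "DERIV (\<lambda>s. f (p + s *\<^sub>R h)) s :> g (p + s *\<^sub>R h) \<bullet> h" if "0 \<le> s" "s \<le> t" for s
  proof -
    have "((\<lambda>s. p + s *\<^sub>R h) has_derivative (\<lambda>s. s *\<^sub>R h)) (at s)"
      by (auto intro!: derivative_eq_intros)
    from has_derivative_compose[OF this der[OF inS[OF that]]]
    have "((\<lambda>s. f (p + s *\<^sub>R h)) has_derivative (\<lambda>x. g (p + s *\<^sub>R h) \<bullet> (x *\<^sub>R h))) (at s)" .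
    then show ?thesis unfolding has_field_derivative_def
      by (rule has_derivative_eq_rhs) (auto simp: fun_eq_iff)
  qed
  then obtain \<xi> where \<xi>: "0 < \<xi>" "\<xi> < t"
    "f (p + t *\<^sub>R h) - f (p + 0 *\<^sub>R h) = (t - 0) * (g (p + \<xi> *\<^sub>R h) \<bullet> h)"
    using MVT2[OF t0, of "\<lambda>s. f (p + s *\<^sub>R h)" "\<lambda>s. g (p + s *\<^sub>R h) \<bullet> h"] by auto
  have "g (p + \<xi> *\<^sub>R h) \<bullet> h = (g (p + \<xi> *\<^sub>R h) - g p - H (\<xi> *\<^sub>R h)) \<bullet> h + \<xi> * (h \<bullet> H h)"
    using g0 linear_scale[OF lin] by (simp add: inner_diff_left inner_diff_right inner_commute)
  also have "\<dots> \<le> norm (g (p + \<xi> *\<^sub>R h) - g p - H (\<xi> *\<^sub>R h)) * norm h"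
    using norm_cauchy_schwarz[of "g (p + \<xi> *\<^sub>R h) - g p - H (\<xi> *\<^sub>R h)" h]
      mult_nonneg_nonpos[of \<xi> "h \<bullet> H h"] \<xi> h(2) by linarith
  also have "\<dots> \<le> \<epsilon> * (\<xi> * norm h) * norm h"
    using d(2)[OF small[of \<xi>]] \<xi> by (intro mult_right_mono) auto
  also have "\<dots> \<le> \<epsilon> * t * norm h ^ 2"
    using \<xi> \<epsilon> by (simp add: power2_eq_square mult_right_mono)
  finally have "f (p + t *\<^sub>R h) - f p \<le> t * (\<epsilon> * t * norm h ^ 2)"
    using \<xi>(3) t0 by (simp add: mult_left_mono)
  also have "\<dots> = \<epsilon> * (t * norm h)\<^sup>2"
    by algebra
  finally have "f (p + t *\<^sub>R h) - f p \<le> \<epsilon> * (t * norm h)\<^sup>2" .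
  moreover have "p + t *\<^sub>R h \<in> S" using inS[of t] t0 by simp
  ultimately show ?thesis using that t0 by blast
qed

lemma nondeg_local_min_of_quadratic_growth:
  fixes f :: "'a::euclidean_space \<Rightarrow> real"
  assumes S: "open S" "p \<in> S" "S \<subseteq> D"
    and der: "\<And>y. y \<in> S \<Longrightarrow> (f has_derivative (\<lambda>h. g y \<bullet> h)) (at y)"
    and gd: "g differentiable (at p)" and g0: "g p = 0"
    and \<gamma>: "\<gamma> > 0" and growth: "\<And>y. y \<in> S \<Longrightarrow> \<gamma> * norm (y - p) ^ 2 \<le> f y - f p"
  shows "nondeg_local_min f D p"
proof -
  obtain H where H: "(g has_derivative H) (at p)" using gd unfolding differentiable_def by blast
  have pd: "h \<bullet> H h > 0" if "h \<noteq> 0" for h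
  proof (rule ccontr)
    assume "\<not> h \<bullet> H h > 0"
    then obtain t where t: "t > 0" "p + t *\<^sub>R h \<in> S"
      "f (p + t *\<^sub>R h) - f p \<le> \<gamma> / 2 * (t * norm h)\<^sup>2"
      using slow_growth_along_nonpositive_direction[OF S(1,2) der H g0 \<open>h \<noteq> 0\<close>, of "\<gamma> / 2"] \<gamma>
      by force
    moreover have "\<gamma> * (t * norm h)\<^sup>2 \<le> f (p + t *\<^sub>R h) - f p"
      using growth[OF t(2)] t(1) by simp
    moreover have "0 < \<gamma> * (t * norm h)\<^sup>2" using \<gamma> t(1) \<open>h \<noteq> 0\<close> by simp
    ultimately show False by linarith
  qed
  have min: "f p \<le> f y" if "y \<in> S" for y
  proof -
    have "0 \<le> \<gamma> * norm (y - p) ^ 2" using \<gamma> by simp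
    with growth[OF that] show ?thesis by linarith
  qed
  show ?thesis unfolding nondeg_local_min_def
  proof (intro conjI exI)
    show "p \<in> D" "open S" "p \<in> S" "S \<subseteq> D" using S by auto
    show "\<forall>y\<in>S. (f has_derivative (\<lambda>h. g y \<bullet> h)) (at y)" using der by auto
    show "(g has_derivative H) (at p)" "g p = 0" by (fact H g0)+
    show "\<forall>h. h \<noteq> 0 \<longrightarrow> h \<bullet> H h > 0" "\<forall>y\<in>S. f p \<le> f y" using pd min by auto
  qed
qed

(* A shape y = (l_i, l_j, l_k, t) is a triangle with vertex i at the origin, vertex j at
  l_k (cos, t) (t is the sine of the tilt of the base edge ij) and apex k at distance l_j from i and
  l_i from j; (apex_u, apex_v) are the coordinates of k in the frame of the base edge, and A, B are
  the unit vectors from i and from j towards k.  The spring tensions s_i, s_j, s_k balance the forces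
  when the apex carries unit weight and the weights of i and j are carried by the ground reactions
  w_i, w_j; psi / kappa_np is the tilt for which the ground penetrations w_i / kappa_np and
  w_j / kappa_np are geometrically consistent. *)
type_synonym shape = "real \<times> real \<times> real \<times> real"

definition li :: "shape \<Rightarrow> real" where
  "li y = fst y"
definition lj :: "shape \<Rightarrow> real" where
  "lj y = fst (snd y)"
definition lk :: "shape \<Rightarrow> real" where
  "lk y = fst (snd (snd y))"
definition tilt :: "shape \<Rightarrow> real" where
  "tilt y = snd (snd (snd y))"

definition tilt_cos :: "shape \<Rightarrow> real" where
  "tilt_cos y = sqrt (1 - tilt y ^ 2)"
definition apex_u :: "shape \<Rightarrow> real" where
  "apex_u y = (lj y ^ 2 - li y ^ 2 + lk y ^ 2) / (2 * lk y)"
definition apex_v :: "shape \<Rightarrow> real" where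
  "apex_v y = sqrt (lj y ^ 2 - apex_u y ^ 2)"
definition Pjx :: "shape \<Rightarrow> real" where
  "Pjx y = lk y * tilt_cos y"
definition Pjz :: "shape \<Rightarrow> real" where
  "Pjz y = lk y * tilt y"
definition Pkx :: "shape \<Rightarrow> real" where
  "Pkx y = apex_u y * tilt_cos y - apex_v y * tilt y"
definition Pkz :: "shape \<Rightarrow> real" where
  "Pkz y = apex_u y * tilt y + apex_v y * tilt_cos y"
definition Ax :: "shape \<Rightarrow> real" where
  "Ax y = Pkx y / lj y"
definition Az :: "shape \<Rightarrow> real" where
  "Az y = Pkz y / lj y"
definition Bx :: "shape \<Rightarrow> real" where
  "Bx y = (Pkx y - Pjx y) / li y"
definition Bz :: "shape \<Rightarrow> real" where
  "Bz y = (Pkz y - Pjz y) / li y"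
definition AB_det :: "shape \<Rightarrow> real" where
  "AB_det y = Ax y * Bz y - Az y * Bx y"
definition sj :: "shape \<Rightarrow> real" where
  "sj y = Bx y / AB_det y"
definition si :: "shape \<Rightarrow> real" where
  "si y = - Ax y / AB_det y"
definition sk :: "shape \<Rightarrow> real" where
  "sk y = - sj y * Ax y / tilt_cos y"
definition psi :: "shape \<Rightarrow> real" where
  "psi y = (si y * Bz y - sj y * Az y - 2 * sk y * tilt y) / lk y"
definition wi :: "shape \<Rightarrow> real" where
  "wi y = 1 - sj y * Az y - sk y * tilt y"
definition wj :: "shape \<Rightarrow> real" where
  "wj y = 1 - si y * Bz y + sk y * tilt y"

definition admissible :: "shape \<Rightarrow> bool" where
  "admissible y \<longleftrightarrow>
     li y > 0 \<and> lj y > 0 \<and> lk y > 0 \<and> tilt y ^ 2 < 1 \<and> apex_u y ^ 2 < lj y ^ 2 \<and> AB_det y \<noteq> 0"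

lemma continuous_li [continuous_intros]: "continuous (at y within S) li"
  unfolding li_def[abs_def] by (intro continuous_intros)
lemma continuous_lj [continuous_intros]: "continuous (at y within S) lj"
  unfolding lj_def[abs_def] by (intro continuous_intros)
lemma continuous_lk [continuous_intros]: "continuous (at y within S) lk"
  unfolding lk_def[abs_def] by (intro continuous_intros)
lemma continuous_tilt [continuous_intros]: "continuous (at y within S) tilt"
  unfolding tilt_def[abs_def] by (intro continuous_intros)
lemma continuous_tilt_cos [continuous_intros]: "continuous (at y within S) tilt_cos"
  unfolding tilt_cos_def[abs_def] by (intro continuous_intros)
lemma continuous_apex_u [continuous_intros]: "lk y \<noteq> 0 \<Longrightarrow> continuous (at y within S) apex_u"
  unfolding apex_u_def[abs_def] by (intro continuous_intros) auto
lemma continuous_apex_v [continuous_intros]: "lk y \<noteq> 0 \<Longrightarrow> continuous (at y within S) apex_v"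
  unfolding apex_v_def[abs_def] by (intro continuous_intros) auto
lemma continuous_Pjx [continuous_intros]: "continuous (at y within S) Pjx"
  unfolding Pjx_def[abs_def] by (intro continuous_intros)
lemma continuous_Pjz [continuous_intros]: "continuous (at y within S) Pjz"
  unfolding Pjz_def[abs_def] by (intro continuous_intros)
lemma continuous_Pkx [continuous_intros]: "lk y \<noteq> 0 \<Longrightarrow> continuous (at y within S) Pkx"
  unfolding Pkx_def[abs_def] by (intro continuous_intros) auto
lemma continuous_Pkz [continuous_intros]: "lk y \<noteq> 0 \<Longrightarrow> continuous (at y within S) Pkz"
  unfolding Pkz_def[abs_def] by (intro continuous_intros) auto
lemma continuous_Ax [continuous_intros]: "lk y \<noteq> 0 \<Longrightarrow> lj y \<noteq> 0 \<Longrightarrow> continuous (at y within S) Ax"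
  unfolding Ax_def[abs_def] by (intro continuous_intros) auto
lemma continuous_Az [continuous_intros]: "lk y \<noteq> 0 \<Longrightarrow> lj y \<noteq> 0 \<Longrightarrow> continuous (at y within S) Az"
  unfolding Az_def[abs_def] by (intro continuous_intros) auto
lemma continuous_Bx [continuous_intros]: "lk y \<noteq> 0 \<Longrightarrow> li y \<noteq> 0 \<Longrightarrow> continuous (at y within S) Bx"
  unfolding Bx_def[abs_def] by (intro continuous_intros) auto
lemma continuous_Bz [continuous_intros]: "lk y \<noteq> 0 \<Longrightarrow> li y \<noteq> 0 \<Longrightarrow> continuous (at y within S) Bz"
  unfolding Bz_def[abs_def] by (intro continuous_intros) auto
lemma continuous_AB_det [continuous_intros]: "lk y \<noteq> 0 \<Longrightarrow> li y \<noteq> 0 \<Longrightarrow> lj y \<noteq> 0 \<Longrightarrow> continuous (at y within S) AB_det"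
  unfolding AB_det_def[abs_def] by (intro continuous_intros) auto

lemma tilt_cos_pos: "admissible y \<Longrightarrow> tilt_cos y > 0"
  unfolding admissible_def tilt_cos_def by simp

lemma continuous_sj [continuous_intros]: "admissible y \<Longrightarrow> continuous (at y within S) sj"
  unfolding sj_def[abs_def] by (intro continuous_intros) (auto simp: admissible_def)
lemma continuous_si [continuous_intros]: "admissible y \<Longrightarrow> continuous (at y within S) si"
  unfolding si_def[abs_def] by (intro continuous_intros) (auto simp: admissible_def)
lemma continuous_sk [continuous_intros]: "admissible y \<Longrightarrow> continuous (at y within S) sk"
  unfolding sk_def[abs_def] using tilt_cos_pos[of y] by (intro continuous_intros) (auto simp: admissible_def)
lemma continuous_psi [continuous_intros]: "admissible y \<Longrightarrow> continuous (at y within S) psi"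
  unfolding psi_def[abs_def] by (intro continuous_intros) (auto simp: admissible_def)
lemma continuous_wi [continuous_intros]: "admissible y \<Longrightarrow> continuous (at y within S) wi"
  unfolding wi_def[abs_def] by (intro continuous_intros) (auto simp: admissible_def)
lemma continuous_wj [continuous_intros]: "admissible y \<Longrightarrow> continuous (at y within S) wj"
  unfolding wj_def[abs_def] by (intro continuous_intros) (auto simp: admissible_def)

lemma shape_side_lengths:
  assumes "admissible y"
  shows "tilt_cos y ^ 2 + tilt y ^ 2 = 1" "apex_v y ^ 2 = lj y ^ 2 - apex_u y ^ 2"
    "Pkx y ^ 2 + Pkz y ^ 2 = lj y ^ 2"
    "(Pkx y - Pjx y) ^ 2 + (Pkz y - Pjz y) ^ 2 = li y ^ 2"
    "Pjx y ^ 2 + Pjz y ^ 2 = lk y ^ 2"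
proof -
  have t: "tilt y ^ 2 < 1" and x: "apex_u y ^ 2 < lj y ^ 2" and k: "lk y > 0"
    using assms by (auto simp: admissible_def)
  show c2: "tilt_cos y ^ 2 + tilt y ^ 2 = 1" using t unfolding tilt_cos_def by simp
  show e2: "apex_v y ^ 2 = lj y ^ 2 - apex_u y ^ 2" using x unfolding apex_v_def by simp
  have "Pkx y ^ 2 + Pkz y ^ 2 = (apex_u y ^ 2 + apex_v y ^ 2) * (tilt_cos y ^ 2 + tilt y ^ 2)"
    unfolding Pkx_def Pkz_def by (simp add: power2_eq_square algebra_simps)
  then show "Pkx y ^ 2 + Pkz y ^ 2 = lj y ^ 2" using c2 e2 by simp
  have "(Pkx y - Pjx y) ^ 2 + (Pkz y - Pjz y) ^ 2 = ((apex_u y - lk y) ^ 2 + apex_v y ^ 2) * (tilt_cos y ^ 2 + tilt y ^ 2)"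
    unfolding Pkx_def Pkz_def Pjx_def Pjz_def by (simp add: power2_eq_square algebra_simps)
  also have "\<dots> = (apex_u y - lk y) ^ 2 + lj y ^ 2 - apex_u y ^ 2" using c2 e2 by simp
  also have "\<dots> = li y ^ 2" using k unfolding apex_u_def by (simp add: field_simps power2_eq_square)
  finally show "(Pkx y - Pjx y) ^ 2 + (Pkz y - Pjz y) ^ 2 = li y ^ 2" .
  have "Pjx y ^ 2 + Pjz y ^ 2 = lk y ^ 2 * (tilt_cos y ^ 2 + tilt y ^ 2)"
    unfolding Pjx_def Pjz_def by (simp add: power2_eq_square algebra_simps)
  then show "Pjx y ^ 2 + Pjz y ^ 2 = lk y ^ 2" using c2 by simp
qed

lemma shape_force_balance:
  assumes "admissible y"
  shows "sj y * Ax y + si y * Bx y = 0" "sj y * Az y + si y * Bz y + 1 = 0"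
    "sj y * Ax y + sk y * tilt_cos y = 0" "- si y * Bx y + sk y * tilt_cos y = 0"
proof -
  have d: "AB_det y \<noteq> 0" and c: "tilt_cos y > 0" using assms tilt_cos_pos by (auto simp: admissible_def)
  show "sj y * Ax y + si y * Bx y = 0" unfolding sj_def si_def using d by (simp add: field_simps)
  have "sj y * Az y + si y * Bz y = (Bx y * Az y - Ax y * Bz y) / AB_det y" using d
    by (simp add: sj_def si_def field_simps)
  also have "Bx y * Az y - Ax y * Bz y = - AB_det y" by (simp add: AB_det_def)
  finally have "sj y * Az y + si y * Bz y = - AB_det y / AB_det y" .
  then show "sj y * Az y + si y * Bz y + 1 = 0" using d by simp
  show "sj y * Ax y + sk y * tilt_cos y = 0" unfolding sk_def using c by simp
  show "- si y * Bx y + sk y * tilt_cos y = 0" unfolding sk_def sj_def si_def using c d by (simp add: field_simps)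
qed

lemma apex_foot_bounds:
  fixes bi bj bk :: real
  assumes pos: "bi > 0" "bj > 0" "bk > 0" and tri: "bk - bj < bi" "bj - bk < bi"
    and max: "bi \<le> bk" "bj \<le> bk"
  defines "x \<equiv> (bj\<^sup>2 - bi\<^sup>2 + bk\<^sup>2) / (2 * bk)"
  shows "0 \<le> x" "x < bj" "x \<le> bk"
proof -
  have "bi\<^sup>2 \<le> bk\<^sup>2" "bj\<^sup>2 \<le> bk\<^sup>2" "0 \<le> bi\<^sup>2" "0 \<le> bj\<^sup>2" using pos max by (auto intro: power_mono)
  then have "0 \<le> bj\<^sup>2 - bi\<^sup>2 + bk\<^sup>2" "bj\<^sup>2 - bi\<^sup>2 + bk\<^sup>2 \<le> 2 * bk\<^sup>2"
    by linarith+
  then show "0 \<le> x" "x \<le> bk" using pos by (simp_all add: x_def divide_le_eq power2_eq_square)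
  have "\<bar>bk - bj\<bar>\<^sup>2 < bi\<^sup>2" using tri pos by (intro power_strict_mono) auto
  then have "bj\<^sup>2 - bi\<^sup>2 + bk\<^sup>2 < bj * (2 * bk)" by (simp add: power2_eq_square algebra_simps)
  then show "x < bj" using pos by (simp add: x_def divide_less_eq)
qed

lemma rest_shape_admissible:
  fixes bi bj bk :: real
  assumes pos: "bi > 0" "bj > 0" "bk > 0" and tri: "bj < bi + bk" "bk < bi + bj"
    and max: "bi \<le> bk" "bj \<le> bk"
  defines "y0 \<equiv> (bi, bj, bk, 0::real)"
  shows "admissible y0" "wi y0 \<ge> 1" "wj y0 \<ge> 1" "Pkz y0 > 0"
proof -
  have L: "li y0 = bi" "lj y0 = bj" "lk y0 = bk" "tilt y0 = 0"
    by (simp_all add: y0_def li_def lj_def lk_def tilt_def)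
  have c: "tilt_cos y0 = 1" by (simp add: tilt_cos_def L)
  define x where "x = (bj\<^sup>2 - bi\<^sup>2 + bk\<^sup>2) / (2 * bk)"
  have xd: "apex_u y0 = x" by (simp add: apex_u_def L x_def)
  have "bk - bj < bi" "bj - bk < bi" using tri by linarith+
  note foot = apex_foot_bounds[OF pos this max, folded x_def]
  have x0: "x \<ge> 0" and xlt: "x < bj" and xle: "x \<le> bk" using foot by simp_all
  have x2: "x ^ 2 < bj ^ 2" using x0 xlt by (intro power_strict_mono) auto
  define e where "e = sqrt (bj ^ 2 - x ^ 2)"
  have e0: "e > 0" unfolding e_def using x2 by simp
  have ed: "apex_v y0 = e" by (simp add: apex_v_def L xd e_def)
  have P: "Pkx y0 = x" "Pkz y0 = e" "Pjx y0 = bk" "Pjz y0 = 0"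
    by (simp_all add: Pkx_def Pkz_def Pjx_def Pjz_def xd ed c L)
  have AB: "Ax y0 = x / bj" "Az y0 = e / bj" "Bx y0 = (x - bk) / bi" "Bz y0 = e / bi"
    by (simp_all add: Ax_def Az_def Bx_def Bz_def P L)
  have D: "AB_det y0 = e * bk / (bi * bj)"
    using pos by (simp add: AB_det_def AB field_simps)
  have D0: "AB_det y0 > 0" using D pos e0 by simp
  show "admissible y0" unfolding admissible_def using pos D0 x2 by (simp add: L xd)
  have "sj y0 * Az y0 = (x - bk) / bk" using pos e0
    by (simp add: sj_def D AB field_simps)
  then have "wi y0 = 2 - x / bk" using pos by (simp add: wi_def L field_simps)
  then show "wi y0 \<ge> 1" using xle pos by (simp add: divide_le_eq)
  have "si y0 * Bz y0 = - x / bk" using pos e0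
    by (simp add: si_def D AB field_simps)
  then have "wj y0 = 1 + x / bk" by (simp add: wj_def L)
  then show "wj y0 \<ge> 1" using x0 pos by simp
  show "Pkz y0 > 0" using P e0 by simp
qed

lemma eventually_gt_half:
  fixes f :: "'a::t2_space \<Rightarrow> real"
  assumes "continuous (at y0) f" "f y0 > 0"
  shows "\<forall>\<^sub>F y in nhds y0. f y > f y0 / 2"
proof -
  have "(f \<longlongrightarrow> f y0) (nhds y0)"
    using assms(1) by (simp add: continuous_at tendsto_at_iff_tendsto_nhds)
  then show ?thesis using assms(2) order_tendstoD(1)[of f "f y0" "nhds y0" "f y0/2"] by simp
qed

lemma admissible_nbhd:
  assumes adm: "admissible y0" and w: "wi y0 \<ge> 1" "wj y0 \<ge> 1" and p: "Pkz y0 > 0"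
  obtains r where "r > 0" "\<And>y. y \<in> cball y0 r \<Longrightarrow> admissible y \<and> wi y \<ge> 1/2 \<and> wj y \<ge> 1/2 \<and>
     Pkz y \<ge> Pkz y0 / 2 \<and> li y \<ge> li y0 / 2 \<and> lj y \<ge> lj y0 / 2 \<and> lk y \<ge> lk y0 / 2"
proof -
  have pos: "li y0 > 0" "lj y0 > 0" "lk y0 > 0" "1 - tilt y0 ^ 2 > 0" "lj y0 ^ 2 - apex_u y0 ^ 2 > 0" "\<bar>AB_det y0\<bar> > 0"
    using adm by (auto simp: admissible_def)
  have cont: "continuous (at y0) li" "continuous (at y0) lj" "continuous (at y0) lk"
    "continuous (at y0) (\<lambda>y. 1 - tilt y ^ 2)" "continuous (at y0) (\<lambda>y. lj y ^ 2 - apex_u y ^ 2)"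
    "continuous (at y0) (\<lambda>y. \<bar>AB_det y\<bar>)" "continuous (at y0) wi" "continuous (at y0) wj"
    "continuous (at y0) Pkz"
    using pos adm by (auto intro!: continuous_intros)
  have "\<forall>\<^sub>F y in nhds y0. li y > li y0 / 2 \<and> lj y > lj y0 / 2 \<and> lk y > lk y0 / 2 \<and>
      1 - tilt y ^ 2 > (1 - tilt y0 ^ 2) / 2 \<and> lj y ^ 2 - apex_u y ^ 2 > (lj y0 ^ 2 - apex_u y0 ^ 2) / 2 \<and>
      \<bar>AB_det y\<bar> > \<bar>AB_det y0\<bar> / 2 \<and> wi y > wi y0 / 2 \<and> wj y > wj y0 / 2 \<and> Pkz y > Pkz y0 / 2"
    using w by (intro eventually_conj eventually_gt_half[OF cont(1) pos(1)] eventually_gt_half[OF cont(2) pos(2)] eventually_gt_half[OF cont(3) pos(3)]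
      eventually_gt_half[OF cont(4) pos(4)] eventually_gt_half[OF cont(5) pos(5)] eventually_gt_half[OF cont(6) pos(6)]
      eventually_gt_half[OF cont(7)] eventually_gt_half[OF cont(8)] eventually_gt_half[OF cont(9) p]) auto
  then obtain d where d: "d > 0" "\<And>y. dist y y0 < d \<Longrightarrow> li y > li y0 / 2 \<and> lj y > lj y0 / 2 \<and> lk y > lk y0 / 2 \<and>
      1 - tilt y ^ 2 > (1 - tilt y0 ^ 2) / 2 \<and> lj y ^ 2 - apex_u y ^ 2 > (lj y0 ^ 2 - apex_u y0 ^ 2) / 2 \<and>
      \<bar>AB_det y\<bar> > \<bar>AB_det y0\<bar> / 2 \<and> wi y > wi y0 / 2 \<and> wj y > wj y0 / 2 \<and> Pkz y > Pkz y0 / 2"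
    unfolding eventually_nhds_metric by blast
  show ?thesis
  proof (rule that[of "d/2"])
    show "d/2 > 0" using d by simp
    fix y assume "y \<in> cball y0 (d/2)"
    then have "dist y y0 < d" using d by (simp add: dist_commute)
    from d(2)[OF this] pos w show "admissible y \<and> wi y \<ge> 1/2 \<and> wj y \<ge> 1/2 \<and>
     Pkz y \<ge> Pkz y0 / 2 \<and> li y \<ge> li y0 / 2 \<and> lj y \<ge> lj y0 / 2 \<and> lk y \<ge> lk y0 / 2"
      unfolding admissible_def by auto
  qed
qed

definition shape_update :: "real \<Rightarrow> real \<Rightarrow> real \<Rightarrow> real \<Rightarrow> real \<Rightarrow> shape \<Rightarrow> shape" where
  "shape_update ks knp bi bj bk y = (bi + si y / ks, bj + sj y / ks, bk + sk y / ks, psi y / knp)"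

lemma shape_update_has_fixpoint:
  assumes adm: "\<And>y. y \<in> cball (bi,bj,bk,0) r \<Longrightarrow> admissible y" and r: "r > 0"
    and M: "\<And>y. y \<in> cball (bi,bj,bk,0) r \<Longrightarrow> \<bar>si y\<bar> \<le> M \<and> \<bar>sj y\<bar> \<le> M \<and> \<bar>sk y\<bar> \<le> M \<and> \<bar>psi y\<bar> \<le> M"
    and ks: "ks > 0" "4 * M \<le> r * ks" and knp: "knp > 0" "4 * M \<le> r * knp"
  obtains y where "y \<in> cball (bi,bj,bk,0) r" "shape_update ks knp bi bj bk y = y"
proof -
  let ?S = "cball (bi,bj,bk,0::real) r"
  have cont: "continuous_on ?S (shape_update ks knp bi bj bk)"
    unfolding shape_update_def[abs_def] using adm ks(1) knp(1)
    by (intro continuous_at_imp_continuous_on ballI) (auto intro!: continuous_intros)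
  have into: "shape_update ks knp bi bj bk \<in> ?S \<rightarrow> ?S"
  proof
    fix y assume y: "y \<in> ?S"
    have "dist (bi,bj,bk,0) (shape_update ks knp bi bj bk y) = norm (si y / ks, sj y / ks, sk y / ks, psi y / knp)"
      by (subst dist_commute) (simp add: shape_update_def dist_norm)
    also have "\<dots> \<le> \<bar>si y / ks\<bar> + (\<bar>sj y / ks\<bar> + (\<bar>sk y / ks\<bar> + \<bar>psi y / knp\<bar>))"
      by (rule order_trans[OF norm_Pair_le], simp,
          rule order_trans[OF norm_Pair_le], simp, rule order_trans[OF norm_Pair_le], simp)
    also have "\<dots> \<le> M / ks + (M / ks + (M / ks + M / knp))"
      using M[OF y] ks knp by (intro add_mono) (auto simp: abs_div divide_right_mono)
    also have "\<dots> \<le> r / 4 + (r/4 + (r/4 + r/4))"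
      using ks knp by (intro add_mono) (auto simp: divide_le_eq mult.commute)
    finally show "shape_update ks knp bi bj bk y \<in> ?S" by simp
  qed
  have ne: "?S \<noteq> {}" using r by auto
  from brouwer[OF compact_cball convex_cball ne cont into] that show ?thesis by blast
qed

definition place :: "3 \<Rightarrow> 3 \<Rightarrow> 3 \<Rightarrow> real \<times> real \<Rightarrow> real \<times> real \<Rightarrow> real \<times> real \<Rightarrow> config" where
  "place i j k a b c = (let P = (\<lambda>v. if v = i then a else if v = j then b else c) in
     ((\<chi> v. fst (P v) - fst (P 1)), (\<chi> v. snd (P v))))"

lemma pos_place:
  assumes "distinct [i, j, k::3]"
  shows "pos (place i j k a b c) i - pos (place i j k a b c) j = a - b"
    "pos (place i j k a b c) i - pos (place i j k a b c) k = a - c"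
    "pos (place i j k a b c) j - pos (place i j k a b c) k = b - c"
    "snd (place i j k a b c) $ i = snd a" "snd (place i j k a b c) $ j = snd b"
    "snd (place i j k a b c) $ k = snd c"
  using assms by (auto simp: place_def pos_def Let_def prod_eq_iff)

lemma fst_place_1: "fst (place i j k a b c) $ 1 = 0"
  by (simp add: place_def Let_def)

definition shape_config :: "3 \<Rightarrow> 3 \<Rightarrow> 3 \<Rightarrow> real \<Rightarrow> shape \<Rightarrow> config" where
  "shape_config i j k z0 y = place i j k (0, z0) (Pjx y, z0 + Pjz y) (Pkx y, z0 + Pkz y)"

lemma snd_shape_config:
  assumes "distinct [i, j, k::3]"
  shows "snd (shape_config i j k z0 y) $ i = z0" "snd (shape_config i j k z0 y) $ j = z0 + Pjz y"
    "snd (shape_config i j k z0 y) $ k = z0 + Pkz y"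
  using pos_place[OF assms] by (simp_all add: shape_config_def)

lemma ell_shape_config:
  assumes dis: "distinct [i, j, k::3]" and y: "admissible y"
  shows "ell (shape_config i j k z0 y) k = lk y" "ell (shape_config i j k z0 y) j = lj y"
    "ell (shape_config i j k z0 y) i = li y"
proof -
  define q where "q = shape_config i j k z0 y"
  have l: "li y > 0" "lj y > 0" "lk y > 0" using y by (auto simp: admissible_def)
  note sides = shape_side_lengths[OF y]
  have dis': "distinct [i, k, j]" "distinct [j, k, i]" using dis by auto
  show "ell (shape_config i j k z0 y) k = lk y"
    using norm_edge_vec_distinct[OF dis, of q] pos_place(1)[OF dis] sides(5) l
    by (simp add: ell_eq_norm_edge_vec q_def shape_config_def norm_Pair_real
        power2_eq_square[symmetric] real_sqrt_unique)
  show "ell (shape_config i j k z0 y) j = lj y"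
    using norm_edge_vec_distinct[OF dis'(1), of q] pos_place(2)[OF dis] sides(3) l
    by (simp add: ell_eq_norm_edge_vec q_def shape_config_def norm_Pair_real
        power2_eq_square[symmetric] real_sqrt_unique)
  have "norm ((Pjx y, z0 + Pjz y) - (Pkx y, z0 + Pkz y)) = li y"
    using sides(4) l
    by (simp add: norm_Pair_real power2_commute[of "Pjx y"] power2_commute[of "Pjz y"] real_sqrt_unique)
  then show "ell (shape_config i j k z0 y) i = li y"
    using norm_edge_vec_distinct[OF dis'(2), of q] pos_place(3)[OF dis]
    by (simp add: ell_eq_norm_edge_vec q_def shape_config_def)
qed

lemma inner_edge_vec_shape_config:
  fixes z0 :: real and y :: shape and w :: config
  assumes dis: "distinct [i, j, k::3]"
  defines "q \<equiv> shape_config i j k z0 y"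
  shows "edge_vec q k \<bullet> edge_vec w k
      = - (Pjx y * (fst w $ i - fst w $ j) + Pjz y * (snd w $ i - snd w $ j))"
    "edge_vec q j \<bullet> edge_vec w j
      = - (Pkx y * (fst w $ i - fst w $ k) + Pkz y * (snd w $ i - snd w $ k))"
    "edge_vec q i \<bullet> edge_vec w i
      = - ((Pkx y - Pjx y) * (fst w $ j - fst w $ k) + (Pkz y - Pjz y) * (snd w $ j - snd w $ k))"
proof -
  have dis': "distinct [i, k, j]" "distinct [j, k, i]" using dis by auto
  have x: "fst q $ i - fst q $ j = - Pjx y" "fst q $ i - fst q $ k = - Pkx y"
    "fst q $ j - fst q $ k = Pjx y - Pkx y"
    using dis by (auto simp: q_def shape_config_def place_def Let_def)
  note z = snd_shape_config[OF dis, of z0 y, folded q_def]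
  show "edge_vec q k \<bullet> edge_vec w k
      = - (Pjx y * (fst w $ i - fst w $ j) + Pjz y * (snd w $ i - snd w $ j))"
    using inner_edge_vec_distinct[OF dis, of q w] x z by (simp add: pos_def algebra_simps)
  show "edge_vec q j \<bullet> edge_vec w j
      = - (Pkx y * (fst w $ i - fst w $ k) + Pkz y * (snd w $ i - snd w $ k))"
    using inner_edge_vec_distinct[OF dis'(1), of q w] x z by (simp add: pos_def algebra_simps)
  show "edge_vec q i \<bullet> edge_vec w i
      = - ((Pkx y - Pjx y) * (fst w $ j - fst w $ k) + (Pkz y - Pjz y) * (snd w $ j - snd w $ k))"
    using inner_edge_vec_distinct[OF dis'(2), of q w] x z by (simp add: pos_def algebra_simps)
qed

definition dU :: "real \<Rightarrow> real \<Rightarrow> (3 \<Rightarrow> real) \<Rightarrow> config \<Rightarrow> config \<Rightarrow> real" where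
  "dU ks knp lbar q w = ks * (\<Sum>e\<in>UNIV. (ell q e - lbar e) * (edge_vec q e \<bullet> edge_vec w e) / ell q e)
      + knp * (\<Sum>v\<in>UNIV. min (snd q $ v) 0 * snd w $ v) + (\<Sum>v\<in>UNIV. snd w $ v)"

lemma shape_fixpoint_equilibrium:
  assumes dis: "distinct [i, j, k::3]" and y: "admissible y"
    and fp: "li y = lbar i + si y / ks" "lj y = lbar j + sj y / ks" "lk y = lbar k + sk y / ks"
      "tilt y = psi y / knp"
    and ks: "ks > 0" and knp: "knp > 0"
    and apex: "Pkz y - wi y / knp > 0" and w: "wi y > 0" "wj y > 0"
  defines "q \<equiv> shape_config i j k (- wi y / knp) y"
  shows "snd q $ j = - wj y / knp" and "dU ks knp lbar q w = 0"
proof -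
  have l: "li y > 0" "lj y > 0" "lk y > 0" using y by (auto simp: admissible_def)
  have "knp * tilt y = psi y" using fp(4) knp by simp
  then have "knp * Pjz y = lk y * psi y" by (simp add: Pjz_def algebra_simps)
  also have "\<dots> = si y * Bz y - sj y * Az y - 2 * sk y * tilt y" using l by (simp add: psi_def)
  finally have "knp * Pjz y = si y * Bz y - sj y * Az y - 2 * sk y * tilt y" .
  moreover have "knp * (- wi y / knp + Pjz y) = - wi y + knp * Pjz y"
    using knp by (simp add: field_simps)
  ultimately have "knp * (- wi y / knp + Pjz y) = - wj y"
    by (simp add: wi_def wj_def)
  then show zj: "snd q $ j = - wj y / knp"
    using snd_shape_config[OF dis] knp by (simp add: q_def field_simps)
  define X where "X v = fst w $ v" for v
  define Z where "Z v = snd w $ v" for v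
  have spring: "ks * ((L - lb) * (- (L * Y)) / L) = - s * Y"
    if "L > 0" "L = lb + s / ks" for L lb s Y
  proof -
    have "ks * (L - lb) = s" using that(2) ks by (simp add: field_simps)
    moreover have "ks * ((L - lb) * (- (L * Y)) / L) = - (ks * (L - lb)) * Y"
      using that(1) by (simp add: field_simps)
    ultimately show ?thesis by simp
  qed
  note ell = ell_shape_config[OF dis y, of "- wi y / knp", folded q_def]
  note inner = inner_edge_vec_shape_config[OF dis, of "- wi y / knp" y w, folded q_def]
  have "edge_vec q k \<bullet> edge_vec w k = - (lk y * (tilt_cos y * (X i - X j) + tilt y * (Z i - Z j)))"
    unfolding inner(1) by (simp add: X_def Z_def Pjx_def Pjz_def algebra_simps)
  then have tk: "ks * ((ell q k - lbar k) * (edge_vec q k \<bullet> edge_vec w k) / ell q k)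
      = - sk y * (tilt_cos y * (X i - X j) + tilt y * (Z i - Z j))"
    using spring[OF l(3) fp(3)] ell(1) by simp
  have "edge_vec q j \<bullet> edge_vec w j = - (lj y * (Ax y * (X i - X k) + Az y * (Z i - Z k)))"
    unfolding inner(2) using l by (simp add: X_def Z_def Ax_def Az_def field_simps)
  then have tj: "ks * ((ell q j - lbar j) * (edge_vec q j \<bullet> edge_vec w j) / ell q j)
      = - sj y * (Ax y * (X i - X k) + Az y * (Z i - Z k))"
    using spring[OF l(2) fp(2)] ell(2) by simp
  have "edge_vec q i \<bullet> edge_vec w i = - (li y * (Bx y * (X j - X k) + Bz y * (Z j - Z k)))"
    unfolding inner(3) using l by (simp add: X_def Z_def Bx_def Bz_def field_simps)
  then have ti: "ks * ((ell q i - lbar i) * (edge_vec q i \<bullet> edge_vec w i) / ell q i)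
      = - si y * (Bx y * (X j - X k) + Bz y * (Z j - Z k))"
    using spring[OF l(1) fp(1)] ell(3) by simp
  have zi: "snd q $ i = - wi y / knp" and zk: "snd q $ k = Pkz y - wi y / knp"
    using snd_shape_config[OF dis] by (simp_all add: q_def)
  have "min (snd q $ i) 0 = - wi y / knp" "min (snd q $ j) 0 = - wj y / knp" "min (snd q $ k) 0 = 0"
    using zi zj zk w knp apex by simp_all
  then have "(\<Sum>v\<in>UNIV. min (snd q $ v) 0 * snd w $ v) = - wi y / knp * Z i - wj y / knp * Z j"
    using sum_UNIV_3_distinct[OF dis] by (simp add: Z_def)
  then have ground: "knp * (\<Sum>v\<in>UNIV. min (snd q $ v) 0 * snd w $ v) = - wi y * Z i - wj y * Z j"
    using knp by (simp add: field_simps)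
  have "dU ks knp lbar q w
      = - (sj y * Ax y + sk y * tilt_cos y) * X i + (- si y * Bx y + sk y * tilt_cos y) * X j
        + (sj y * Ax y + si y * Bx y) * X k + (1 - sj y * Az y - sk y * tilt y - wi y) * Z i
        + (1 - si y * Bz y + sk y * tilt y - wj y) * Z j + (sj y * Az y + si y * Bz y + 1) * Z k"
    unfolding dU_def ground using tk tj ti sum_UNIV_3_distinct[OF dis]
    by (simp add: distrib_left Z_def[symmetric] algebra_simps)
  then show "dU ks knp lbar q w = 0"
    using shape_force_balance[OF y] by (simp add: wi_def wj_def)
qed

definition lift_x :: "3 \<Rightarrow> redconfig \<Rightarrow> real" where
  "lift_x v h = (if v = 1 then 0 else if v = 2 then fst (fst h) else snd (fst h))"

lemma fst_lift_section: "fst (lift_section h) $ v = lift_x v h"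
  using exhaust_3[of v] by (auto simp: lift_section_def lift_x_def)

lemma snd_lift_section: "snd (lift_section h) = snd h"
  by (simp add: lift_section_def)

lemma lift_section_add: "lift_section (p + h) = lift_section p + lift_section h"
  by (simp add: lift_section_def prod_eq_iff vec_eq_iff forall_3)

lemma bounded_linear_lift_section: "bounded_linear lift_section"
proof -
  have "linear lift_section"
    by (intro linearI) (simp_all add: lift_section_add lift_section_def prod_eq_iff vec_eq_iff forall_3)
  then show ?thesis by (simp add: linear_conv_bounded_linear)
qed

lemma proj_lift_section: "proj (lift_section y) = y"
  by (simp add: proj_def lift_section_def prod_eq_iff)

lemma lift_section_proj: "fst q $ 1 = 0 \<Longrightarrow> lift_section (proj q) = q"
  by (simp add: proj_def lift_section_def prod_eq_iff vec_eq_iff forall_3)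

lemma has_derivative_ell:
  assumes "ell q e \<noteq> 0"
  shows "((\<lambda>q. ell q e) has_derivative (\<lambda>w. (edge_vec q e \<bullet> edge_vec w e) / ell q e)) (at q)"
proof -
  have nz: "edge_vec q e \<noteq> 0" using assms by (auto simp: ell_eq_norm_edge_vec)
  have "((\<lambda>q. norm (edge_vec q e)) has_derivative (\<lambda>w. edge_vec w e \<bullet> sgn (edge_vec q e))) (at q)"
    using has_derivative_compose[OF bounded_linear_imp_has_derivative[OF bounded_linear_edge_vec]
        has_derivative_norm[OF nz]] by simp
  then show ?thesis unfolding ell_eq_norm_edge_vec
    by (rule has_derivative_eq_rhs) (simp add: fun_eq_iff sgn_div_norm inner_commute field_simps)
qed

lemma U_has_derivative:
  assumes "\<And>e. ell q e \<noteq> 0"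
  shows "(U ks knp lbar has_derivative dU ks knp lbar q) (at q)"
proof -
  have z: "((\<lambda>q::config. snd q $ v) has_derivative (\<lambda>w. snd w $ v)) (at q)" for v
    by (rule bounded_linear_imp_has_derivative[OF bounded_linear_snd_component])
  have "(chi has_derivative (\<lambda>x. min (snd q $ v) 0 * x)) (at (snd q $ v))" for v
    using chi_has_real_derivative[of "snd q $ v"] unfolding has_field_derivative_def by simp
  note chi = has_derivative_compose[OF z this]
  have "(U ks knp lbar has_derivative (\<lambda>w.
      ks / 2 * (\<Sum>e\<in>UNIV. 2 * (ell q e - lbar e) * ((edge_vec q e \<bullet> edge_vec w e) / ell q e))
      + knp * (\<Sum>v\<in>UNIV. min (snd q $ v) 0 * snd w $ v) + (\<Sum>v\<in>UNIV. snd w $ v))) (at q)"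
    unfolding U_def[abs_def] using has_derivative_ell[OF assms] chi z
    by (intro has_derivative_add has_derivative_mult_right has_derivative_sum)
       (auto intro!: derivative_eq_intros)
  moreover have "ks / 2 * (2 * (ell q e - lbar e) * ((edge_vec q e \<bullet> edge_vec w e) / ell q e))
      = ks * ((ell q e - lbar e) * (edge_vec q e \<bullet> edge_vec w e) / ell q e)" for e w
    by (cases "ell q e = 0") (simp_all add: field_simps)
  then have "ks / 2 * (\<Sum>e\<in>UNIV. 2 * (ell q e - lbar e) * ((edge_vec q e \<bullet> edge_vec w e) / ell q e))
      = ks * (\<Sum>e\<in>UNIV. (ell q e - lbar e) * (edge_vec q e \<bullet> edge_vec w e) / ell q e)" for w
    by (simp only: sum_distrib_left)
  ultimately show ?thesis
    unfolding dU_def[abs_def] by (simp only:)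
qed

lemma linear_eq_inner_sum_Basis:
  fixes L :: "'a::euclidean_space \<Rightarrow> real"
  assumes "linear L"
  shows "L h = (\<Sum>b\<in>Basis. L b *\<^sub>R b) \<bullet> h"
proof -
  have "L h = L (\<Sum>b\<in>Basis. (h \<bullet> b) *\<^sub>R b)" by (simp add: euclidean_representation)
  also have "\<dots> = (\<Sum>b\<in>Basis. L b * (b \<bullet> h))"
    using assms by (simp add: linear_sum linear_scale inner_commute mult.commute)
  also have "\<dots> = (\<Sum>b\<in>Basis. L b *\<^sub>R b) \<bullet> h"
    by (simp add: inner_sum_left)
  finally show ?thesis .
qed

definition gradU :: "real \<Rightarrow> real \<Rightarrow> (3 \<Rightarrow> real) \<Rightarrow> redconfig \<Rightarrow> redconfig" where
  "gradU ks knp lbar y = (\<Sum>b\<in>Basis. dU ks knp lbar (lift_section y) (lift_section b) *\<^sub>R b)"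

lemma Uhat_has_derivative_gradU:
  assumes "\<And>e. ell (lift_section y) e \<noteq> 0"
  shows "(Uhat ks knp lbar has_derivative (\<lambda>h. gradU ks knp lbar y \<bullet> h)) (at y)"
proof -
  have D: "(Uhat ks knp lbar has_derivative (\<lambda>h. dU ks knp lbar (lift_section y) (lift_section h))) (at y)"
    unfolding Uhat_def[abs_def]
    using has_derivative_compose[OF bounded_linear_imp_has_derivative[OF bounded_linear_lift_section]
        U_has_derivative[OF assms]] by simp
  have "(\<lambda>h. dU ks knp lbar (lift_section y) (lift_section h)) = (\<lambda>h. gradU ks knp lbar y \<bullet> h)"
    unfolding gradU_def using has_derivative_linear[OF D] by (intro ext linear_eq_inner_sum_Basis)
  then show ?thesis using D by simp
qed

lemma min_zero_differentiable:
  fixes x :: real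
  assumes "x \<noteq> 0"
  shows "(\<lambda>x. min x 0) differentiable (at x)"
proof (cases "x < 0")
  case True
  have "((\<lambda>x. x) has_derivative (\<lambda>h. h)) (at x)" by simp
  then have "((\<lambda>x. min x 0) has_derivative (\<lambda>h. h)) (at x)"
    by (rule has_derivative_transform_within_open[OF _ open_lessThan[of 0]]) (use True in auto)
  then show ?thesis unfolding differentiable_def by blast
next
  case False
  then have "x > 0" using assms by simp
  have "((\<lambda>x. 0) has_derivative (\<lambda>h. 0)) (at x)" by simp
  then have "((\<lambda>x. min x 0) has_derivative (\<lambda>h. 0)) (at x)"
    by (rule has_derivative_transform_within_open[OF _ open_greaterThan[of 0]]) (use \<open>x > 0\<close> in auto)
  then show ?thesis unfolding differentiable_def by blast
qed

lemma gradU_differentiable: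
  assumes "\<And>e. ell (lift_section p) e \<noteq> 0" and "\<And>v. snd p $ v \<noteq> 0"
  shows "gradU ks knp lbar differentiable (at p)"
proof -
  have lin: "bounded_linear (\<lambda>y. edge_vec (lift_section y) e)" for e
    using bounded_linear_compose[OF bounded_linear_edge_vec bounded_linear_lift_section] by (simp add: o_def)
  have ell: "(\<lambda>y. ell (lift_section y) e) differentiable (at p)" for e
    unfolding ell_eq_norm_edge_vec using assms(1)[of e]
    by (intro differentiable_compose[of norm, OF _ bounded_linear_imp_differentiable[OF lin]])
       (simp add: ell_eq_norm_edge_vec)
  have inner: "(\<lambda>y. edge_vec (lift_section y) e \<bullet> c) differentiable (at p)" for e c
    using bounded_linear_imp_differentiable[OF bounded_linear_compose[OF bounded_linear_inner_left lin]]
    by (simp add: o_def)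
  have "(\<lambda>y. min (snd y $ v) 0) differentiable (at p)" for v
    using differentiable_compose[OF min_zero_differentiable[OF assms(2)]
        bounded_linear_imp_differentiable[OF bounded_linear_snd_component]] by (simp add: o_def)
  then have ground: "(\<lambda>y. min (snd (lift_section y) $ v) 0) differentiable (at p)" for v
    by (simp add: snd_lift_section)
  have "(\<lambda>y. dU ks knp lbar (lift_section y) w) differentiable (at p)" for w
    unfolding dU_def
    by (intro differentiable_add differentiable_mult differentiable_sum differentiable_divide
        differentiable_diff differentiable_const ballI ell inner ground assms finite_class.finite_UNIV)
  then show ?thesis unfolding gradU_def[abs_def]
    by (intro differentiable_sum differentiable_scaleR differentiable_const ballI finite_Basis)
qed

lemma spring_remainder_ge:
  fixes s ks u R B :: real
  assumes "0 \<le> R" "R \<le> B" "ks \<ge> 0"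
  shows "s * R + ks / 2 * (u + R)\<^sup>2 \<ge> - \<bar>s\<bar> * B - ks / 2 * B\<^sup>2 + ks / 4 * u\<^sup>2"
proof -
  have "\<bar>s * R\<bar> \<le> \<bar>s\<bar> * B" using assms by (simp add: abs_mult mult_left_mono)
  then have "s * R \<ge> - \<bar>s\<bar> * B" by linarith
  moreover have "(u + 2 * R)\<^sup>2 \<ge> 0" and "R\<^sup>2 \<le> B\<^sup>2" using assms by (auto intro: power_mono)
  then have "(u + R)\<^sup>2 \<ge> u\<^sup>2 / 2 - B\<^sup>2" by (simp add: power2_eq_square algebra_simps)
  then have "ks / 2 * (u + R)\<^sup>2 \<ge> ks / 2 * (u\<^sup>2 / 2 - B\<^sup>2)" using assms by (intro mult_left_mono) auto
  ultimately show ?thesis by (simp add: algebra_simps)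
qed

text \<open>Here u is the first-order change of the length |d| under the displacement x; the
  second-order part of the length change lies between 0 and B.\<close>
lemma spring_increment_ge:
  fixes d x :: "'a::real_inner"
  assumes "d \<noteq> 0" "2 * norm x \<le> norm d" "ks \<ge> 0"
  defines "u \<equiv> (d \<bullet> x) / norm d" and "B \<equiv> norm x ^ 2 / norm d"
  shows "ks / 2 * ((norm (d + x) - lb)\<^sup>2 - (norm d - lb)\<^sup>2) - ks * (norm d - lb) * u
      \<ge> - \<bar>ks * (norm d - lb)\<bar> * B - ks / 2 * B\<^sup>2 + ks / 4 * u\<^sup>2"
proof -
  define R where "R = norm (d + x) - norm d - u"
  have "0 \<le> R" "R \<le> B"
    using norm_add_remainder_ge[OF assms(1), of x] norm_add_remainder_le[OF assms(1,2)]
    by (simp_all add: R_def u_def B_def)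
  moreover have "ks / 2 * ((norm (d + x) - lb)\<^sup>2 - (norm d - lb)\<^sup>2) - ks * (norm d - lb) * u
      = ks * (norm d - lb) * R + ks / 2 * (u + R)\<^sup>2"
    by (simp add: R_def power2_eq_square algebra_simps)
  ultimately show ?thesis using spring_remainder_ge assms(3) by simp
qed

lemma U_increment_ge:
  assumes crit: "\<And>w. dU ks knp lbar q w = 0" and ell: "\<And>e. ell q e > 0"
    and ks: "ks \<ge> 0" and knp: "knp \<ge> 0"
    and C: "\<And>v. v \<in> C \<Longrightarrow> snd q $ v < 0 \<and> snd q $ v + snd w $ v < 0"
    and small: "\<And>e. 2 * norm (edge_vec w e) \<le> ell q e"
  shows "U ks knp lbar (q + w) - U ks knp lbar q \<ge>
    (\<Sum>e\<in>UNIV. - \<bar>ks * (ell q e - lbar e)\<bar> * (norm (edge_vec w e)^2 / ell q e)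
       - ks / 2 * (norm (edge_vec w e)^2 / ell q e)\<^sup>2
       + ks / 4 * ((edge_vec q e \<bullet> edge_vec w e) / ell q e)\<^sup>2)
    + knp / 2 * (\<Sum>v\<in>C. (snd w $ v)\<^sup>2)"
proof -
  define S where "S e = ks / 2 * ((ell (q + w) e - lbar e)\<^sup>2 - (ell q e - lbar e)\<^sup>2)
    - ks * ((ell q e - lbar e) * (edge_vec q e \<bullet> edge_vec w e) / ell q e)" for e
  define G where "G v = knp * (chi (snd q $ v + snd w $ v) - chi (snd q $ v) - min (snd q $ v) 0 * snd w $ v)"
    for v
  have "(\<Sum>e\<in>UNIV. S e) = ks / 2 * (\<Sum>e\<in>UNIV. (ell (q + w) e - lbar e)\<^sup>2)
      - ks / 2 * (\<Sum>e\<in>UNIV. (ell q e - lbar e)\<^sup>2)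
      - ks * (\<Sum>e\<in>UNIV. (ell q e - lbar e) * (edge_vec q e \<bullet> edge_vec w e) / ell q e)"
    by (simp add: S_def sum_subtractf sum_distrib_left right_diff_distrib)
  moreover have "(\<Sum>v\<in>UNIV. G v) = knp * (\<Sum>v\<in>UNIV. chi (snd q $ v + snd w $ v))
      - knp * (\<Sum>v\<in>UNIV. chi (snd q $ v)) - knp * (\<Sum>v\<in>UNIV. min (snd q $ v) 0 * snd w $ v)"
    by (simp add: G_def sum_subtractf sum_distrib_left right_diff_distrib)
  ultimately have "U ks knp lbar (q + w) - U ks knp lbar q = dU ks knp lbar q w + (\<Sum>e\<in>UNIV. S e) + (\<Sum>v\<in>UNIV. G v)"
    by (simp add: U_def dU_def sum.distrib)
  then have eq: "U ks knp lbar (q + w) - U ks knp lbar q = (\<Sum>e\<in>UNIV. S e) + (\<Sum>v\<in>UNIV. G v)"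
    using crit by simp
  have "S e \<ge> - \<bar>ks * (ell q e - lbar e)\<bar> * (norm (edge_vec w e)^2 / ell q e)
       - ks / 2 * (norm (edge_vec w e)^2 / ell q e)\<^sup>2
       + ks / 4 * ((edge_vec q e \<bullet> edge_vec w e) / ell q e)\<^sup>2" for e
    using spring_increment_ge[of "edge_vec q e" "edge_vec w e" ks "lbar e"] ell[of e] small[of e] ks
    by (simp add: S_def ell_eq_norm_edge_vec edge_vec_add)
  then have springs: "(\<Sum>e\<in>UNIV. S e) \<ge> (\<Sum>e\<in>UNIV. - \<bar>ks * (ell q e - lbar e)\<bar> * (norm (edge_vec w e)^2 / ell q e)
       - ks / 2 * (norm (edge_vec w e)^2 / ell q e)\<^sup>2
       + ks / 4 * ((edge_vec q e \<bullet> edge_vec w e) / ell q e)\<^sup>2)"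
    by (rule sum_mono)
  have G_nonneg: "G v \<ge> 0" for v
    using chi_remainder_bounds[of "snd q $ v" "snd w $ v"] knp by (simp add: G_def)
  have "knp / 2 * (\<Sum>v\<in>C. (snd w $ v)\<^sup>2) = (\<Sum>v\<in>C. G v)"
    unfolding sum_distrib_left using chi_remainder_neg C
    by (intro sum.cong) (simp_all add: G_def)
  also have "\<dots> \<le> (\<Sum>v\<in>UNIV. G v)"
    using G_nonneg by (intro sum_mono2) auto
  finally have "knp / 2 * (\<Sum>v\<in>C. (snd w $ v)\<^sup>2) \<le> (\<Sum>v\<in>UNIV. G v)" .
  with eq springs show ?thesis by linarith
qed

lemma abs_lift_x_le: "\<bar>lift_x v h\<bar> \<le> norm (fst h)"
  using norm_fst_le[of "fst (fst h)" "snd (fst h)"] norm_snd_le[of "snd (fst h)" "fst (fst h)"]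
  by (auto simp: lift_x_def)

lemma abs_snd_component_le: "\<bar>snd h $ v\<bar> \<le> norm h"
  using component_le_norm_cart[of "snd h" v] norm_snd_le[of "snd h" "fst h"] by simp

lemma norm_pos_lift_section_le: "norm (pos (lift_section h) v) \<le> norm h"
proof -
  have "(lift_x v h)\<^sup>2 \<le> (norm (fst h))\<^sup>2"
    using abs_lift_x_le[of v h] by (metis abs_ge_zero power2_abs power_mono)
  moreover have "(snd h $ v)\<^sup>2 \<le> (norm (snd h))\<^sup>2"
    using component_le_norm_cart[of "snd h" v] by (metis abs_ge_zero power2_abs power_mono real_norm_def)
  ultimately have "sqrt ((lift_x v h)\<^sup>2 + (snd h $ v)\<^sup>2) \<le> sqrt ((norm (fst h))\<^sup>2 + (norm (snd h))\<^sup>2)"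
    by simp
  then show ?thesis
    by (simp add: pos_def fst_lift_section snd_lift_section norm_Pair_real norm_Pair[symmetric])
qed

lemma norm_edge_vec_lift_section_le: "norm (edge_vec (lift_section h) e) \<le> 2 * norm h"
  unfolding edge_vec_def
  using norm_triangle_ineq4[of "pos (lift_section h) (fst (edge_ends e))" "pos (lift_section h) (snd (edge_ends e))"]
    norm_pos_lift_section_le[of h "fst (edge_ends e)"] norm_pos_lift_section_le[of h "snd (edge_ends e)"]
  by linarith

lemma homogeneous_2x2_eq_0:
  fixes a b c d x y :: real
  assumes "a * x + b * y = 0" "c * x + d * y = 0" "a * d - b * c \<noteq> 0"
  shows "x = 0" "y = 0"
proof -
  have "x * (a * d - b * c) = d * (a * x + b * y) - b * (c * x + d * y)"
    "y * (a * d - b * c) = a * (c * x + d * y) - c * (a * x + b * y)"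
    by (simp_all add: algebra_simps)
  then have "x * (a * d - b * c) = 0" "y * (a * d - b * c) = 0"
    using assms(1,2) by simp_all
  then show "x = 0" "y = 0" using assms(3) by simp_all
qed

lemma shape_cross_eq:
  assumes "admissible y"
  shows "Pkx y * (Pkz y - Pjz y) - Pkz y * (Pkx y - Pjx y) = lj y * li y * AB_det y"
  using assms by (simp add: admissible_def AB_det_def Ax_def Az_def Bx_def Bz_def field_simps)

text \<open>The first-order changes of the three edge lengths of the configuration of shape y,
  together with the heights of the two grounded vertices i and j, under a displacement h of
  the reduced configuration.\<close>
definition shape_strain :: "3 \<Rightarrow> 3 \<Rightarrow> 3 \<Rightarrow> shape \<Rightarrow> redconfig \<Rightarrow> real" where
  "shape_strain i j k y h =
     ((Pjx y * (lift_x i h - lift_x j h) + Pjz y * (snd h $ i - snd h $ j)) / lk y)\<^sup>2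
   + ((Pkx y * (lift_x i h - lift_x k h) + Pkz y * (snd h $ i - snd h $ k)) / lj y)\<^sup>2
   + (((Pkx y - Pjx y) * (lift_x j h - lift_x k h) + (Pkz y - Pjz y) * (snd h $ j - snd h $ k)) / li y)\<^sup>2
   + (snd h $ i)\<^sup>2 + (snd h $ j)\<^sup>2"

lemma shape_strain_scaleR: "shape_strain i j k y (c *\<^sub>R h) = c\<^sup>2 * shape_strain i j k y h"
proof -
  have *: "((P * (c * a - c * b) + Q * (c * d - c * e)) / L)\<^sup>2 = c\<^sup>2 * ((P * (a - b) + Q * (d - e)) / L)\<^sup>2"
    for P Q L a b d e :: real
  proof -
    have "P * (c * a - c * b) + Q * (c * d - c * e) = c * (P * (a - b) + Q * (d - e))"
      by (simp add: algebra_simps)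
    then show ?thesis by (simp add: power_mult_distrib power_divide)
  qed
  have a: "lift_x v (c *\<^sub>R h) = c * lift_x v h" "snd (c *\<^sub>R h) $ v = c * snd h $ v" for v
    by (simp_all add: lift_x_def)
  show ?thesis
    unfolding shape_strain_def a * by (simp only: power_mult_distrib distrib_left)
qed

lemma shape_strain_nonneg: "shape_strain i j k y h \<ge> 0"
  by (simp add: shape_strain_def)

text \<open>Rigidity: the grounded heights vanish, the base edge (cos > 0) gives x_i = x_j, the two
  edges at the apex determine its displacement since A and B are independent, and x_1 = 0
  removes the horizontal translation.\<close>
lemma shape_strain_pos:
  assumes dis: "distinct [i, j, k::3]" and y: "admissible y" and h: "h \<noteq> 0"
  shows "shape_strain i j k y h > 0"
proof (rule ccontr)
  assume "\<not> shape_strain i j k y h > 0"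
  then have "shape_strain i j k y h = 0" using shape_strain_nonneg[of i j k y h] by simp
  have sq: "a\<^sup>2 + b\<^sup>2 + c\<^sup>2 + d\<^sup>2 + e\<^sup>2 = 0 \<Longrightarrow> a = 0 \<and> b = 0 \<and> c = 0 \<and> d = 0 \<and> e = 0"
    for a b c d e :: real
  proof -
    assume H: "a\<^sup>2 + b\<^sup>2 + c\<^sup>2 + d\<^sup>2 + e\<^sup>2 = 0"
    have "a\<^sup>2 \<ge> 0" "b\<^sup>2 \<ge> 0" "c\<^sup>2 \<ge> 0" "d\<^sup>2 \<ge> 0" "e\<^sup>2 \<ge> 0" by simp_all
    then have "a\<^sup>2 = 0" "b\<^sup>2 = 0" "c\<^sup>2 = 0" "d\<^sup>2 = 0" "e\<^sup>2 = 0" using H by linarith+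
    then show ?thesis by simp
  qed
  have l: "li y > 0" "lj y > 0" "lk y > 0" using y by (auto simp: admissible_def)
  from sq[OF \<open>shape_strain i j k y h = 0\<close>[unfolded shape_strain_def]]
  have e1: "Pjx y * (lift_x i h - lift_x j h) + Pjz y * (snd h $ i - snd h $ j) = 0"
    and e2: "Pkx y * (lift_x i h - lift_x k h) + Pkz y * (snd h $ i - snd h $ k) = 0"
    and e3: "(Pkx y - Pjx y) * (lift_x j h - lift_x k h) + (Pkz y - Pjz y) * (snd h $ j - snd h $ k) = 0"
    and zi: "snd h $ i = 0" and zj: "snd h $ j = 0"
    using l by auto
  have "lk y * tilt_cos y * (lift_x i h - lift_x j h) = 0" using e1 zi zj by (simp add: Pjx_def)
  then have xj: "lift_x j h = lift_x i h" using l tilt_cos_pos[OF y] by simp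
  have s1: "Pkx y * (lift_x i h - lift_x k h) + Pkz y * (- snd h $ k) = 0"
    and s2: "(Pkx y - Pjx y) * (lift_x i h - lift_x k h) + (Pkz y - Pjz y) * (- snd h $ k) = 0"
    using e2 e3 zi zj xj by simp_all
  have "Pkx y * (Pkz y - Pjz y) - Pkz y * (Pkx y - Pjx y) \<noteq> 0"
    using shape_cross_eq[OF y] y l by (simp add: admissible_def)
  note homogeneous_2x2_eq_0[OF s1 s2 this]
  then have xk: "lift_x k h = lift_x i h" and zk: "snd h $ k = 0" by simp_all
  have "lift_x v h = lift_x i h \<and> snd h $ v = 0" for v
    using UNIV_3_distinct[OF dis] xj xk zi zj zk by auto
  from this[of 1] this[of 2] this[of 3] have "fst h = 0" "snd h = 0"
    by (simp_all add: lift_x_def prod_eq_iff vec_eq_iff forall_3)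
  then show False using h by (simp add: prod_eq_iff)
qed

lemma continuous_lift_x [continuous_intros]:
  "continuous F g \<Longrightarrow> continuous F (\<lambda>x. lift_x v (g x))"
  by (cases "v = 1"; cases "v = 2") (auto simp: lift_x_def intro!: continuous_intros)

lemma shape_strain_uniform_lower_bound:
  assumes dis: "distinct [i, j, k::3]" and adm: "\<And>y. y \<in> cball y0 r \<Longrightarrow> admissible y"
    and r: "r \<ge> 0"
  obtains c0 where "c0 > 0" "\<And>y h. y \<in> cball y0 r \<Longrightarrow> c0 * norm h ^ 2 \<le> shape_strain i j k y h"
proof -
  let ?K = "cball y0 r \<times> sphere (0::redconfig) 1"
  have cK: "compact ?K" by (intro compact_Times compact_cball compact_sphere)
  obtain b :: redconfig where "b \<in> Basis" using nonempty_Basis by blast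
  then have "(y0, b) \<in> ?K" using r by auto
  then have neK: "?K \<noteq> {}" by blast
  have cont: "continuous_on ?K (\<lambda>p. shape_strain i j k (fst p) (snd p))"
  proof (intro continuous_at_imp_continuous_on ballI)
    fix p assume "p \<in> ?K"
    then have y: "admissible (fst p)" using adm by auto
    then have nz: "li (fst p) \<noteq> 0" "lj (fst p) \<noteq> 0" "lk (fst p) \<noteq> 0" by (auto simp: admissible_def)
    have fst: "continuous (at p) (\<lambda>p. f (fst p))" if "continuous (at (fst p)) f" for f :: "shape \<Rightarrow> real"
      by (rule continuous_within_compose3[where g = f and f = fst, OF that]) (intro continuous_intros)
    have "continuous (at p) (\<lambda>p. li (fst p))" "continuous (at p) (\<lambda>p. lj (fst p))"
      "continuous (at p) (\<lambda>p. lk (fst p))" "continuous (at p) (\<lambda>p. Pjx (fst p))"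
      "continuous (at p) (\<lambda>p. Pjz (fst p))" "continuous (at p) (\<lambda>p. Pkx (fst p))"
      "continuous (at p) (\<lambda>p. Pkz (fst p))"
      using nz by (auto intro!: fst continuous_intros)
    then show "continuous (at p) (\<lambda>p. shape_strain i j k (fst p) (snd p))"
      unfolding shape_strain_def using nz by (intro continuous_intros) auto
  qed
  obtain m where m: "m \<in> ?K"
    "\<And>p. p \<in> ?K \<Longrightarrow> shape_strain i j k (fst m) (snd m) \<le> shape_strain i j k (fst p) (snd p)"
    using continuous_attains_inf[OF cK neK cont] by blast
  define c0 where "c0 = shape_strain i j k (fst m) (snd m)"
  show ?thesis
  proof (rule that)
    show "c0 > 0" unfolding c0_def using m(1) adm by (intro shape_strain_pos[OF dis]) auto
    fix y h assume y: "y \<in> cball y0 r"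
    show "c0 * norm h ^ 2 \<le> shape_strain i j k y h"
    proof (cases "h = 0")
      case False
      define u where "u = (1 / norm h) *\<^sub>R h"
      have "c0 \<le> shape_strain i j k y u"
        using m(2)[of "(y, u)"] y False by (simp add: c0_def u_def)
      moreover have "shape_strain i j k y h = norm h ^ 2 * shape_strain i j k y u"
        using False shape_strain_scaleR[of i j k y "norm h" u] by (simp add: u_def)
      ultimately show ?thesis by (metis mult.commute mult_left_mono zero_le_power2)
    qed (simp add: shape_strain_nonneg)
  qed
qed

definition linear_strain :: "config \<Rightarrow> 3 \<Rightarrow> 3 \<Rightarrow> config \<Rightarrow> real" where
  "linear_strain q i j w =
     (\<Sum>e\<in>UNIV. ((edge_vec q e \<bullet> edge_vec w e) / ell q e)\<^sup>2) + (snd w $ i)\<^sup>2 + (snd w $ j)\<^sup>2"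

lemma linear_strain_shape_config:
  assumes dis: "distinct [i, j, k::3]" and y: "admissible y"
  shows "linear_strain (shape_config i j k z0 y) i j (lift_section h) = shape_strain i j k y h"
proof -
  have sq: "((- X) / L)\<^sup>2 = (X / L)\<^sup>2" for X L :: real
    by (simp add: power2_eq_square)
  show ?thesis
    unfolding linear_strain_def shape_strain_def sum_UNIV_3_distinct[OF dis]
      inner_edge_vec_shape_config[OF dis] ell_shape_config[OF dis y] sq
    by (simp add: fst_lift_section snd_lift_section)
qed

lemma Qspace_of_ell_nonzero: "(\<And>e. ell q e \<noteq> 0) \<Longrightarrow> q \<in> Qspace"
proof -
  assume ell: "\<And>e. ell q e \<noteq> 0"
  have "pos q u \<noteq> pos q v" if uv: "u \<noteq> v" for u v
  proof -
    obtain e where "edge_ends e = (u, v) \<or> edge_ends e = (v, u)" using edge_ends_exists[OF uv] .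
    then show ?thesis using ell[of e] by (auto simp: ell_def)
  qed
  then show ?thesis by (auto simp: Qspace_def)
qed

lemma proj_eq_imp_pos_diff_eq:
  assumes "proj q = proj q'"
  shows "pos q u - pos q v = pos q' u - pos q' v"
proof -
  have "fst q $ w - fst q' $ w = fst q $ 1 - fst q' $ 1" for w
    using assms exhaust_3[of w] by (auto simp: proj_def)
  then have "fst q $ u - fst q $ v = fst q' $ u - fst q' $ v"
    by (smt (verit))
  moreover have "snd q = snd q'" using assms by (simp add: proj_def)
  ultimately show ?thesis by (simp add: pos_def)
qed

definition det2 :: "real \<times> real \<Rightarrow> real \<times> real \<Rightarrow> real" where
  "det2 a b = fst a * snd b - snd a * fst b"

lemma R_total_eq:
  "R_total \<nu>s \<nu>ns \<nu>db q v = \<nu>s / 2 * (\<Sum>e\<in>UNIV. (ell_dot q v e)\<^sup>2)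
    + \<nu>ns / 2 * (\<Sum>i\<in>UNIV. - min (snd q $ i) 0 * (fst v $ i)\<^sup>2)
    + \<nu>db / 2 * (\<Sum>i\<in>UNIV. chi (snd q $ i) * (snd v $ i)\<^sup>2)"
  by (simp add: R_total_def R_shape_def R_ns_def R_db_def deriv_chi sum_negf)

text \<open>A velocity without dissipation cannot move the grounded vertices i and j, whose friction
  and damping coefficients are positive, and then cannot move the apex either without
  stretching one of the two edges at it, which are not parallel.\<close>
lemma R_total_pos:
  assumes dis: "distinct [i, j, k::3]" and z: "snd q $ i < 0" "snd q $ j < 0"
    and det: "det2 (pos q i - pos q k) (pos q j - pos q k) \<noteq> 0"
    and \<nu>: "\<nu>s > 0" "\<nu>ns > 0" "\<nu>db > 0" and v: "v \<noteq> 0"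
  shows "R_total \<nu>s \<nu>ns \<nu>db q v > 0"
proof (rule ccontr)
  define f1 where "f1 e = (ell_dot q v e)\<^sup>2" for e
  define f2 where "f2 x = - min (snd q $ x) 0 * (fst v $ x)\<^sup>2" for x
  define f3 where "f3 x = chi (snd q $ x) * (snd v $ x)\<^sup>2" for x
  have f: "f1 x \<ge> 0" "f2 x \<ge> 0" "f3 x \<ge> 0" for x
    by (auto simp: f1_def f2_def f3_def chi_nonneg mult_nonpos_nonneg intro!: mult_nonneg_nonneg)
  then have "\<nu>s / 2 * sum f1 UNIV \<ge> 0" "\<nu>ns / 2 * sum f2 UNIV \<ge> 0" "\<nu>db / 2 * sum f3 UNIV \<ge> 0"
    using \<nu> by (simp_all add: sum_nonneg)
  moreover assume "\<not> R_total \<nu>s \<nu>ns \<nu>db q v > 0"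
  then have "\<nu>s / 2 * sum f1 UNIV + \<nu>ns / 2 * sum f2 UNIV + \<nu>db / 2 * sum f3 UNIV \<le> 0"
    by (simp add: R_total_eq f1_def f2_def f3_def)
  ultimately have "\<nu>s / 2 * sum f1 UNIV = 0" "\<nu>ns / 2 * sum f2 UNIV = 0" "\<nu>db / 2 * sum f3 UNIV = 0"
    by linarith+
  then have "sum f1 UNIV = 0" "sum f2 UNIV = 0" "sum f3 UNIV = 0"
    using \<nu> by simp_all
  then have f0: "f1 x = 0" "f2 x = 0" "f3 x = 0" for x
    using f by (simp_all add: sum_nonneg_eq_0_iff)
  have "chi (snd q $ i) > 0" "chi (snd q $ j) > 0" using z by (auto simp: chi_def)
  then have vij: "pos v i = 0" "pos v j = 0"
    using f0(2)[of i] f0(2)[of j] f0(3)[of i] f0(3)[of j] z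
    by (auto simp: f2_def f3_def pos_def zero_prod_def)
  have dis': "distinct [i, k, j]" "distinct [j, k, i]" using dis by auto
  have ab: "pos q i - pos q k \<noteq> 0" "pos q j - pos q k \<noteq> 0" using det by (auto simp: det2_def)
  have "(pos q i - pos q k) \<bullet> pos v k = 0" "(pos q j - pos q k) \<bullet> pos v k = 0"
    using f0(1)[of j] f0(1)[of i] vij ab
      inner_edge_vec_distinct[OF dis'(1), of q v] norm_edge_vec_distinct[OF dis'(1), of q]
      inner_edge_vec_distinct[OF dis'(2), of q v] norm_edge_vec_distinct[OF dis'(2), of q]
    by (simp_all add: f1_def ell_dot_eq)
  then have "pos v k = 0"
    using homogeneous_2x2_eq_0[of "fst (pos q i - pos q k)" "fst (pos v k)" "snd (pos q i - pos q k)"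
        "snd (pos v k)" "fst (pos q j - pos q k)" "snd (pos q j - pos q k)"] det
    by (simp add: inner_prod_def det2_def prod_eq_iff)
  then have "pos v x = 0" for x
    using vij UNIV_3_distinct[OF dis] by auto
  then have "v = 0" by (simp add: pos_def prod_eq_iff vec_eq_iff)
  then show False using v by simp
qed

lemma strain_energy_lower_bound:
  fixes ks knp M m0 c0 n Zi Zj :: real and s u B :: "3 \<Rightarrow> real"
  assumes ks: "ks > 0" and knp: "knp > 0" and m0: "m0 > 0" and M: "M \<ge> 0"
    and s: "\<And>e. \<bar>s e\<bar> \<le> M" and B: "\<And>e. 0 \<le> B e \<and> B e \<le> 4 * n\<^sup>2 / m0"
    and strain: "c0 * n\<^sup>2 \<le> (\<Sum>e\<in>UNIV. (u e)\<^sup>2) + Zi\<^sup>2 + Zj\<^sup>2"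
    and stiff: "192 * M \<le> min ks knp * c0 * m0" and small: "384 * ks * n\<^sup>2 \<le> min ks knp * c0 * m0\<^sup>2"
  shows "min ks knp * c0 / 8 * n\<^sup>2
    \<le> (\<Sum>e\<in>UNIV. - \<bar>s e\<bar> * B e - ks / 2 * (B e)\<^sup>2 + ks / 4 * (u e)\<^sup>2) + knp / 2 * (Zi\<^sup>2 + Zj\<^sup>2)"
proof -
  define \<kappa> where "\<kappa> = min ks knp"
  define b where "b = 4 * n\<^sup>2 / m0"
  have "- \<bar>s e\<bar> * B e - ks / 2 * (B e)\<^sup>2 \<ge> - M * b - ks / 2 * b\<^sup>2" for e
  proof -
    have "\<bar>s e\<bar> * B e \<le> M * b" using s[of e] B[of e] M by (intro mult_mono) (auto simp: b_def)
    moreover have "ks / 2 * (B e)\<^sup>2 \<le> ks / 2 * b\<^sup>2"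
      using B[of e] ks by (intro mult_left_mono power_mono) (auto simp: b_def)
    ultimately show ?thesis by linarith
  qed
  then have "(\<Sum>e\<in>UNIV. - \<bar>s e\<bar> * B e - ks / 2 * (B e)\<^sup>2 + ks / 4 * (u e)\<^sup>2)
      \<ge> (\<Sum>e\<in>(UNIV::3 set). - M * b - ks / 2 * b\<^sup>2 + ks / 4 * (u e)\<^sup>2)"
    by (intro sum_mono) simp
  also have "(\<Sum>e\<in>(UNIV::3 set). - M * b - ks / 2 * b\<^sup>2 + ks / 4 * (u e)\<^sup>2)
      = - 3 * M * b - 3 * ks / 2 * b\<^sup>2 + ks / 4 * (\<Sum>e\<in>UNIV. (u e)\<^sup>2)"
    by (simp add: sum.distrib sum_distrib_left)
  finally have springs: "(\<Sum>e\<in>UNIV. - \<bar>s e\<bar> * B e - ks / 2 * (B e)\<^sup>2 + ks / 4 * (u e)\<^sup>2)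
      \<ge> - 3 * M * b - 3 * ks / 2 * b\<^sup>2 + ks / 4 * (\<Sum>e\<in>UNIV. (u e)\<^sup>2)" .
  have "ks / 4 * (\<Sum>e\<in>UNIV. (u e)\<^sup>2) + knp / 2 * (Zi\<^sup>2 + Zj\<^sup>2)
      \<ge> \<kappa> / 4 * ((\<Sum>e\<in>UNIV. (u e)\<^sup>2) + Zi\<^sup>2 + Zj\<^sup>2)"
  proof -
    have "\<kappa> / 4 * (\<Sum>e\<in>UNIV. (u e)\<^sup>2) \<le> ks / 4 * (\<Sum>e\<in>UNIV. (u e)\<^sup>2)"
      by (intro mult_right_mono sum_nonneg) (auto simp: \<kappa>_def)
    moreover have "\<kappa> / 4 * (Zi\<^sup>2 + Zj\<^sup>2) \<le> knp / 2 * (Zi\<^sup>2 + Zj\<^sup>2)"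
      using knp by (intro mult_right_mono) (auto simp: \<kappa>_def)
    ultimately show ?thesis by (simp add: algebra_simps)
  qed
  moreover have "\<kappa> / 4 * (c0 * n\<^sup>2) \<le> \<kappa> / 4 * ((\<Sum>e\<in>UNIV. (u e)\<^sup>2) + Zi\<^sup>2 + Zj\<^sup>2)"
    using strain ks knp by (intro mult_left_mono) (auto simp: \<kappa>_def)
  moreover have "3 * M * b \<le> \<kappa> * c0 / 16 * n\<^sup>2"
  proof -
    have "3 * M * b = 12 * M / m0 * n\<^sup>2" by (simp add: b_def)
    also have "\<dots> \<le> \<kappa> * c0 / 16 * n\<^sup>2"
      using stiff m0 by (intro mult_right_mono) (auto simp: \<kappa>_def divide_le_eq)
    finally show ?thesis .
  qed
  moreover have "3 * ks / 2 * b\<^sup>2 \<le> \<kappa> * c0 / 16 * n\<^sup>2"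
  proof -
    have "3 * ks / 2 * b\<^sup>2 = (384 * ks * n\<^sup>2) * n\<^sup>2 / (16 * m0\<^sup>2)"
      using m0 by (simp add: b_def power2_eq_square field_simps)
    also have "\<dots> \<le> (\<kappa> * c0 * m0\<^sup>2) * n\<^sup>2 / (16 * m0\<^sup>2)"
      using small by (intro divide_right_mono mult_right_mono) (auto simp: \<kappa>_def)
    also have "\<dots> = \<kappa> * c0 / 16 * n\<^sup>2" using m0 by simp
    finally show ?thesis .
  qed
  moreover have "\<kappa> / 4 * (c0 * n\<^sup>2) = 4 * (\<kappa> * c0 / 16 * n\<^sup>2)"
    "\<kappa> * c0 / 8 * n\<^sup>2 = 2 * (\<kappa> * c0 / 16 * n\<^sup>2)" by simp_all
  ultimately show ?thesis using springs unfolding \<kappa>_def[symmetric] by linarith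
qed

text \<open>An equilibrium resting on the ground at i and j with the apex k above it, whose springs
  are stiff compared with their tensions M.\<close>
definition stiff_equilibrium :: "real \<Rightarrow> real \<Rightarrow> (3 \<Rightarrow> real) \<Rightarrow> 3 \<Rightarrow> 3 \<Rightarrow> 3 \<Rightarrow> config \<Rightarrow> bool" where
  "stiff_equilibrium ks knp lbar i j k q \<longleftrightarrow>
     distinct [i, j, k] \<and> 0 < ks \<and> 0 < knp \<and> fst q $ 1 = 0 \<and> (\<forall>w. dU ks knp lbar q w = 0) \<and>
     snd q $ i \<le> - 1 / (2 * knp) \<and> snd q $ j \<le> - 1 / (2 * knp) \<and> 0 < snd q $ k \<and>
     det2 (pos q i - pos q k) (pos q j - pos q k) \<noteq> 0 \<and>
     (\<exists>m0 M c0. 0 < m0 \<and> 0 < c0 \<and> (\<forall>e. m0 \<le> ell q e) \<and> (\<forall>e. \<bar>ks * (ell q e - lbar e)\<bar> \<le> M) \<and>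
        (\<forall>h. c0 * norm h ^ 2 \<le> linear_strain q i j (lift_section h)) \<and>
        192 * M \<le> min ks knp * c0 * m0)"

lemma stiff_equilibrium_quadratic_growth:
  assumes eq: "stiff_equilibrium ks knp lbar i j k q"
  obtains \<delta> \<gamma> where "\<delta> > 0" "\<gamma> > 0"
    "\<And>y e. y \<in> ball (proj q) \<delta> \<Longrightarrow> ell (lift_section y) e \<noteq> 0"
    "\<And>y. y \<in> ball (proj q) \<delta> \<Longrightarrow>
      \<gamma> * norm (y - proj q) ^ 2 \<le> Uhat ks knp lbar y - Uhat ks knp lbar (proj q)"
proof -
  obtain m0 M c0 where m0: "0 < m0" "\<And>e. m0 \<le> ell q e" and c0: "0 < c0"
    and M: "\<And>e. \<bar>ks * (ell q e - lbar e)\<bar> \<le> M"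
    and strain: "\<And>h. c0 * norm h ^ 2 \<le> linear_strain q i j (lift_section h)"
    and stiff: "192 * M \<le> min ks knp * c0 * m0"
    using eq unfolding stiff_equilibrium_def by blast
  have dis: "distinct [i, j, k]" and ks: "ks > 0" and knp: "knp > 0" and crit: "\<And>w. dU ks knp lbar q w = 0"
    and zi: "snd q $ i \<le> - 1 / (2 * knp)" and zj: "snd q $ j \<le> - 1 / (2 * knp)"
    and lift: "lift_section (proj q) = q"
    using eq lift_section_proj by (auto simp: stiff_equilibrium_def)
  have M0: "M \<ge> 0" using M[of 1] by linarith
  define \<kappa> where "\<kappa> = min ks knp"
  have \<kappa>: "\<kappa> > 0" using ks knp by (simp add: \<kappa>_def)
  define \<delta> where "\<delta> = min (min (m0 / 4) (1 / (4 * knp))) (sqrt (\<kappa> * c0 * m0\<^sup>2 / (384 * ks)))"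
  have \<delta>: "\<delta> > 0" "\<delta> \<le> m0 / 4" "\<delta> \<le> 1 / (4 * knp)" "\<delta> \<le> sqrt (\<kappa> * c0 * m0\<^sup>2 / (384 * ks))"
    using m0 knp \<kappa> c0 ks by (auto simp: \<delta>_def)
  have near_ell: "ell (lift_section y) e \<ge> m0 / 2"
    and near_growth: "\<kappa> * c0 / 8 * norm (y - proj q) ^ 2 \<le> Uhat ks knp lbar y - Uhat ks knp lbar (proj q)"
    if y: "y \<in> ball (proj q) \<delta>" for y e
  proof -
    define h where "h = y - proj q"
    define w where "w = lift_section h"
    have nh: "norm h < \<delta>" using y by (simp add: h_def dist_norm norm_minus_commute)
    have ly: "lift_section y = q + w" using lift_section_add[of "proj q" h] lift by (simp add: h_def w_def)
    have small: "2 * norm (edge_vec w e) \<le> ell q e" for e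
      using norm_edge_vec_lift_section_le[of h e] nh \<delta>(2) m0(2)[of e] unfolding w_def by linarith
    have "norm (edge_vec q e) - norm (edge_vec w e) \<le> norm (edge_vec q e + edge_vec w e)"
      by (metis norm_diff_ineq norm_minus_cancel diff_minus_eq_add)
    then show "ell (lift_section y) e \<ge> m0 / 2"
      using small[of e] m0(2)[of e] by (simp add: ly ell_eq_norm_edge_vec edge_vec_add)
    have ell0: "ell q e > 0" for e using m0(1) m0(2)[of e] by linarith
    have C: "snd q $ v < 0 \<and> snd q $ v + snd w $ v < 0" if "v \<in> {i, j}" for v
    proof -
      have "\<bar>snd w $ v\<bar> < 1 / (4 * knp)"
        using abs_snd_component_le[of h v] nh \<delta>(3) by (simp add: w_def snd_lift_section)
      moreover have "- 1 / (2 * knp) + 1 / (4 * knp) < 0" using knp by (simp add: field_simps)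
      ultimately show ?thesis using that zi zj by auto
    qed
    have B: "0 \<le> norm (edge_vec w e) ^ 2 / ell q e \<and> norm (edge_vec w e) ^ 2 / ell q e \<le> 4 * (norm h)\<^sup>2 / m0" for e
    proof -
      have "norm (edge_vec w e) ^ 2 \<le> 4 * (norm h)\<^sup>2"
        using power_mono[OF norm_edge_vec_lift_section_le[of h e], of 2] by (simp add: w_def power_mult_distrib)
      then show ?thesis
        using ell0[of e] m0 by (auto intro!: frac_le)
    qed
    have "(norm h)\<^sup>2 \<le> \<delta>\<^sup>2" using nh by (intro power_mono) auto
    also have "\<dots> \<le> (sqrt (\<kappa> * c0 * m0\<^sup>2 / (384 * ks)))\<^sup>2" using \<delta>(1,4) by (intro power_mono) auto
    also have "\<dots> = \<kappa> * c0 * m0\<^sup>2 / (384 * ks)" using \<kappa> c0 ks by simp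
    finally have "384 * ks * (norm h)\<^sup>2 \<le> \<kappa> * c0 * m0\<^sup>2" using ks by (simp add: le_divide_eq mult.commute)
    define u where "u e = (edge_vec q e \<bullet> edge_vec w e) / ell q e" for e
    have "(\<Sum>v\<in>{i, j}. (snd w $ v)\<^sup>2) = (snd w $ i)\<^sup>2 + (snd w $ j)\<^sup>2" using dis by simp
    then have increment: "U ks knp lbar (q + w) - U ks knp lbar q \<ge>
      (\<Sum>e\<in>UNIV. - \<bar>ks * (ell q e - lbar e)\<bar> * (norm (edge_vec w e) ^ 2 / ell q e)
         - ks / 2 * (norm (edge_vec w e) ^ 2 / ell q e)\<^sup>2 + ks / 4 * (u e)\<^sup>2)
      + knp / 2 * ((snd w $ i)\<^sup>2 + (snd w $ j)\<^sup>2)"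
      using U_increment_ge[of ks knp lbar q "{i, j}" w, OF crit ell0 _ _ C small] ks knp
      by (simp add: u_def)
    have "c0 * (norm h)\<^sup>2 \<le> (\<Sum>e\<in>UNIV. (u e)\<^sup>2) + (snd w $ i)\<^sup>2 + (snd w $ j)\<^sup>2"
      using strain[of h] by (simp add: linear_strain_def u_def w_def)
    from strain_energy_lower_bound[where s = "\<lambda>e. ks * (ell q e - lbar e)"
        and B = "\<lambda>e. norm (edge_vec w e) ^ 2 / ell q e", OF ks knp m0(1) M0 M B this stiff]
      \<open>384 * ks * (norm h)\<^sup>2 \<le> \<kappa> * c0 * m0\<^sup>2\<close> increment
    show "\<kappa> * c0 / 8 * norm (y - proj q) ^ 2 \<le> Uhat ks knp lbar y - Uhat ks knp lbar (proj q)"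
      by (simp add: Uhat_def ly lift h_def \<kappa>_def)
  qed
  show ?thesis
  proof (rule that[OF \<delta>(1), of "\<kappa> * c0 / 8"])
    show "\<kappa> * c0 / 8 > 0" using \<kappa> c0 by simp
    show "ell (lift_section y) e \<noteq> 0" if "y \<in> ball (proj q) \<delta>" for y e
      using near_ell[OF that, of e] m0(1) by linarith
  qed (rule near_growth)
qed

lemma stiff_equilibrium_heights:
  assumes "stiff_equilibrium ks knp lbar i j k q"
  shows "snd q $ i < 0" "snd q $ j < 0" "snd q $ k > 0"
proof -
  have "- 1 / (2 * knp) < 0" using assms by (simp add: stiff_equilibrium_def)
  then show "snd q $ i < 0" "snd q $ j < 0" "snd q $ k > 0"
    using assms unfolding stiff_equilibrium_def by linarith+
qed

lemma stiff_equilibrium_nondeg_local_min: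
  assumes eq: "stiff_equilibrium ks knp lbar i j k q"
  shows "nondeg_local_min (Uhat ks knp lbar) Qred (proj q)"
proof -
  obtain \<delta> \<gamma> where \<delta>: "\<delta> > 0" and \<gamma>: "\<gamma> > 0"
    and ell: "\<And>y e. y \<in> ball (proj q) \<delta> \<Longrightarrow> ell (lift_section y) e \<noteq> 0"
    and growth: "\<And>y. y \<in> ball (proj q) \<delta> \<Longrightarrow>
      \<gamma> * norm (y - proj q) ^ 2 \<le> Uhat ks knp lbar y - Uhat ks knp lbar (proj q)"
    using stiff_equilibrium_quadratic_growth[OF eq] by blast
  have "distinct [i, j, k]" using eq by (simp add: stiff_equilibrium_def)
  then have heights: "snd (proj q) $ v \<noteq> 0" for v
    using cases_3_distinct[of i j k v] stiff_equilibrium_heights[OF eq] by (auto simp: proj_def)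
  have "dU ks knp lbar q w = 0" for w using eq unfolding stiff_equilibrium_def by blast
  then have grad0: "gradU ks knp lbar (proj q) = 0"
    using eq lift_section_proj by (simp add: gradU_def stiff_equilibrium_def)
  have sub: "ball (proj q) \<delta> \<subseteq> Qred"
  proof
    fix y assume "y \<in> ball (proj q) \<delta>"
    then have "lift_section y \<in> Qspace" using ell by (intro Qspace_of_ell_nonzero) blast
    then show "y \<in> Qred" unfolding Qred_def by (metis proj_lift_section image_eqI)
  qed
  show ?thesis
  proof (rule nondeg_local_min_of_quadratic_growth[where S = "ball (proj q) \<delta>" and g = "gradU ks knp lbar",
        OF open_ball _ sub _ _ grad0 \<gamma> growth])
    show "proj q \<in> ball (proj q) \<delta>" using \<delta> by simp
    show "(Uhat ks knp lbar has_derivative (\<lambda>h. gradU ks knp lbar y \<bullet> h)) (at y)"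
      if "y \<in> ball (proj q) \<delta>" for y
      using ell[OF that] by (rule Uhat_has_derivative_gradU)
    show "gradU ks knp lbar differentiable (at (proj q))"
      using ell[of "proj q"] \<delta> heights by (intro gradU_differentiable) auto
  qed
qed

lemma stiff_equilibrium_fiber_R_total_pos:
  assumes eq: "stiff_equilibrium ks knp lbar i j k q" and fiber: "proj q' = proj q"
    and \<nu>: "\<nu>s > 0" "\<nu>ns > 0" "\<nu>db > 0" and v: "v \<noteq> 0"
  shows "R_total \<nu>s \<nu>ns \<nu>db q' v > 0"
proof (rule R_total_pos[OF _ _ _ _ \<nu> v])
  have "snd q' = snd q" using fiber by (simp add: proj_def)
  then show "snd q' $ i < 0" "snd q' $ j < 0" using stiff_equilibrium_heights[OF eq] by simp_all
  show "distinct [i, j, k]" "det2 (pos q' i - pos q' k) (pos q' j - pos q' k) \<noteq> 0"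
    using eq proj_eq_imp_pos_diff_eq[OF fiber] by (simp_all add: stiff_equilibrium_def)
qed

lemma rest_shape_uniform_bounds:
  fixes bi bj bk :: real
  assumes dis: "distinct [i, j, k::3]" and pos: "bi > 0" "bj > 0" "bk > 0"
    and tri: "bj < bi + bk" "bk < bi + bj" and max: "bi \<le> bk" "bj \<le> bk"
  obtains r M m0 P0 c0 where "r > 0" "M \<ge> 0" "m0 > 0" "P0 > 0" "c0 > 0"
    "\<And>y. y \<in> cball (bi, bj, bk, 0) r \<Longrightarrow> admissible y \<and> 1 / 2 \<le> wi y \<and> 1 / 2 \<le> wj y \<and> P0 \<le> Pkz y
      \<and> m0 \<le> li y \<and> m0 \<le> lj y \<and> m0 \<le> lk y
      \<and> \<bar>si y\<bar> \<le> M \<and> \<bar>sj y\<bar> \<le> M \<and> \<bar>sk y\<bar> \<le> M \<and> \<bar>psi y\<bar> \<le> M \<and> \<bar>wi y\<bar> \<le> M"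
    "\<And>y h. y \<in> cball (bi, bj, bk, 0) r \<Longrightarrow> c0 * norm h ^ 2 \<le> shape_strain i j k y h"
proof -
  define y0 where "y0 = (bi, bj, bk, 0::real)"
  note rest = rest_shape_admissible[OF pos tri max, folded y0_def]
  obtain r where r: "r > 0" and nbhd: "\<And>y. y \<in> cball y0 r \<Longrightarrow> admissible y \<and> wi y \<ge> 1/2 \<and> wj y \<ge> 1/2 \<and>
     Pkz y \<ge> Pkz y0 / 2 \<and> li y \<ge> li y0 / 2 \<and> lj y \<ge> lj y0 / 2 \<and> lk y \<ge> lk y0 / 2"
    using admissible_nbhd[OF rest] by blast
  have adm: "\<And>y. y \<in> cball y0 r \<Longrightarrow> admissible y" using nbhd by blast
  have cont: "continuous_on (cball y0 r) (\<lambda>y. \<bar>si y\<bar> + \<bar>sj y\<bar> + \<bar>sk y\<bar> + \<bar>psi y\<bar> + \<bar>wi y\<bar>)"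
    using adm by (intro continuous_at_imp_continuous_on ballI) (auto intro!: continuous_intros)
  obtain M where M: "M \<ge> 0"
    "\<And>y. y \<in> cball y0 r \<Longrightarrow> norm (\<bar>si y\<bar> + \<bar>sj y\<bar> + \<bar>sk y\<bar> + \<bar>psi y\<bar> + \<bar>wi y\<bar>) \<le> M"
    using continuous_on_compact_bound[OF compact_cball cont] by blast
  obtain c0 where c0: "c0 > 0" "\<And>y h. y \<in> cball y0 r \<Longrightarrow> c0 * norm h ^ 2 \<le> shape_strain i j k y h"
    using shape_strain_uniform_lower_bound[OF dis adm less_imp_le[OF r]] by blast
  define m0 where "m0 = min (min bi bj) bk / 2"
  show ?thesis
  proof (rule that[OF r M(1), of m0 "Pkz y0 / 2" c0])
    show "m0 > 0" "Pkz y0 / 2 > 0" "c0 > 0" using pos rest c0 by (simp_all add: m0_def)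
    fix y :: shape assume "y \<in> cball (bi, bj, bk, 0) r"
    then have y: "y \<in> cball y0 r" by (simp add: y0_def)
    have "\<bar>si y\<bar> + \<bar>sj y\<bar> + \<bar>sk y\<bar> + \<bar>psi y\<bar> + \<bar>wi y\<bar> \<le> M"
      using M(2)[OF y] by simp
    moreover have "li y0 = bi" "lj y0 = bj" "lk y0 = bk" by (simp_all add: y0_def li_def lj_def lk_def)
    ultimately show "admissible y \<and> 1 / 2 \<le> wi y \<and> 1 / 2 \<le> wj y \<and> Pkz y0 / 2 \<le> Pkz y
      \<and> m0 \<le> li y \<and> m0 \<le> lj y \<and> m0 \<le> lk y
      \<and> \<bar>si y\<bar> \<le> M \<and> \<bar>sj y\<bar> \<le> M \<and> \<bar>sk y\<bar> \<le> M \<and> \<bar>psi y\<bar> \<le> M \<and> \<bar>wi y\<bar> \<le> M"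
      using nbhd[OF y] unfolding m0_def by auto
    show "c0 * norm h ^ 2 \<le> shape_strain i j k y h" for h using c0(2)[OF y] .
  qed
qed

lemma stiff_equilibrium_shape_config:
  assumes dis: "distinct [i, j, k::3]" and y: "admissible y"
    and fp: "shape_update ks knp (lbar i) (lbar j) (lbar k) y = y"
    and ks: "ks > 0" and knp: "knp > 0"
    and w: "1 / 2 \<le> wi y" "1 / 2 \<le> wj y" and apex: "wi y < knp * Pkz y"
    and m0: "m0 > 0" "m0 \<le> li y" "m0 \<le> lj y" "m0 \<le> lk y"
    and M: "\<bar>si y\<bar> \<le> M" "\<bar>sj y\<bar> \<le> M" "\<bar>sk y\<bar> \<le> M"
    and c0: "c0 > 0" "\<And>h. c0 * norm h ^ 2 \<le> shape_strain i j k y h"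
    and stiff: "192 * M \<le> min ks knp * c0 * m0"
  shows "stiff_equilibrium ks knp lbar i j k (shape_config i j k (- wi y / knp) y)"
proof -
  define q where "q = shape_config i j k (- wi y / knp) y"
  have fp': "li y = lbar i + si y / ks" "lj y = lbar j + sj y / ks" "lk y = lbar k + sk y / ks"
    "tilt y = psi y / knp"
    using fp by (simp_all add: shape_update_def li_def lj_def lk_def tilt_def prod_eq_iff)
  have apex': "Pkz y - wi y / knp > 0" using apex knp by (simp add: field_simps)
  have w0: "wi y > 0" "wj y > 0" using w by simp_all
  note equilibrium = shape_fixpoint_equilibrium[OF dis y fp' ks knp apex' w0, folded q_def]
  note ell = ell_shape_config[OF dis y, of "- wi y / knp", folded q_def]
  have "1 / (2 * knp) \<le> wi y / knp" "1 / (2 * knp) \<le> wj y / knp"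
    using w knp by (simp_all add: field_simps)
  then have heights: "snd q $ i \<le> - 1 / (2 * knp)" "snd q $ j \<le> - 1 / (2 * knp)" "0 < snd q $ k"
    using snd_shape_config[OF dis, of "- wi y / knp" y] equilibrium(1) apex'
    by (simp_all add: q_def)
  have "pos q i - pos q k = (- Pkx y, - Pkz y)" "pos q j - pos q k = (Pjx y - Pkx y, Pjz y - Pkz y)"
    using pos_place(2,3)[OF dis] by (simp_all add: q_def shape_config_def)
  then have "det2 (pos q i - pos q k) (pos q j - pos q k) = Pkx y * (Pkz y - Pjz y) - Pkz y * (Pkx y - Pjx y)"
    by (simp add: det2_def algebra_simps)
  then have det: "det2 (pos q i - pos q k) (pos q j - pos q k) \<noteq> 0"
    using shape_cross_eq[OF y] y by (simp add: admissible_def)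
  have "ks * (li y - lbar i) = si y" "ks * (lj y - lbar j) = sj y" "ks * (lk y - lbar k) = sk y"
    using fp' ks by (simp_all add: field_simps)
  then have "m0 \<le> ell q e \<and> \<bar>ks * (ell q e - lbar e)\<bar> \<le> M" for e
    using cases_3_distinct[OF dis, of e] ell m0 M by auto
  then have "\<forall>e. m0 \<le> ell q e" "\<forall>e. \<bar>ks * (ell q e - lbar e)\<bar> \<le> M" by simp_all
  moreover have "\<forall>h. c0 * norm h ^ 2 \<le> linear_strain q i j (lift_section h)"
    using c0(2) linear_strain_shape_config[OF dis y] by (simp add: q_def)
  moreover have "fst q $ 1 = 0" "\<forall>w. dU ks knp lbar q w = 0"
    using equilibrium(2) fst_place_1 by (simp_all add: q_def shape_config_def)
  ultimately show ?thesis
    unfolding stiff_equilibrium_def q_def[symmetric]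
    using dis ks knp heights det m0(1) c0(1) stiff by blast
qed

lemma sorted_triangle_labels:
  fixes lbar :: "3 \<Rightarrow> real"
  assumes "lbar 1 > 0" "lbar 2 > 0" "lbar 3 > 0"
    and "lbar 1 < lbar 2 + lbar 3" "lbar 2 < lbar 1 + lbar 3" "lbar 3 < lbar 1 + lbar 2"
  obtains i j k where "distinct [i, j, k]" "lbar i > 0" "lbar j > 0" "lbar k > 0"
    "lbar j < lbar i + lbar k" "lbar k < lbar i + lbar j" "lbar i \<le> lbar k" "lbar j \<le> lbar k"
proof -
  have d: "distinct [1, 2, 3::3]" "distinct [1, 3, 2::3]" "distinct [2, 3, 1::3]" by simp_all
  consider "lbar 1 \<le> lbar 3 \<and> lbar 2 \<le> lbar 3" | "lbar 1 \<le> lbar 2 \<and> lbar 3 \<le> lbar 2"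
    | "lbar 2 \<le> lbar 1 \<and> lbar 3 \<le> lbar 1"
    by linarith
  then show ?thesis
  proof cases
    case 1
    then show ?thesis using that[OF d(1)] assms by auto
  next
    case 2
    then show ?thesis using that[OF d(2)] assms by auto
  next
    case 3
    then show ?thesis using that[OF d(3)] assms by auto
  qed
qed

text \<open>The longest rest edge is used as the base ij, so that the apex lies above the base.\<close>
lemma stiff_equilibria_exist:
  fixes lbar :: "3 \<Rightarrow> real"
  assumes "lbar 1 > 0" "lbar 2 > 0" "lbar 3 > 0"
    and "lbar 1 < lbar 2 + lbar 3" "lbar 2 < lbar 1 + lbar 3" "lbar 3 < lbar 1 + lbar 2"
  obtains K where "\<And>ks knp. K < ks \<Longrightarrow> K < knp \<Longrightarrow> \<exists>i j k q. stiff_equilibrium ks knp lbar i j k q"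
proof -
  obtain i j k where dis: "distinct [i, j, k]" and rest: "lbar i > 0" "lbar j > 0" "lbar k > 0"
    "lbar j < lbar i + lbar k" "lbar k < lbar i + lbar j" "lbar i \<le> lbar k" "lbar j \<le> lbar k"
    using sorted_triangle_labels[OF assms] by blast
  obtain r M m0 P0 c0 where r: "r > 0" and pos: "M \<ge> 0" "m0 > 0" "P0 > 0" "c0 > 0"
    and bounds: "\<And>y. y \<in> cball (lbar i, lbar j, lbar k, 0) r \<Longrightarrow> admissible y \<and> 1 / 2 \<le> wi y \<and> 1 / 2 \<le> wj y
      \<and> P0 \<le> Pkz y \<and> m0 \<le> li y \<and> m0 \<le> lj y \<and> m0 \<le> lk y
      \<and> \<bar>si y\<bar> \<le> M \<and> \<bar>sj y\<bar> \<le> M \<and> \<bar>sk y\<bar> \<le> M \<and> \<bar>psi y\<bar> \<le> M \<and> \<bar>wi y\<bar> \<le> M"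
    and strain: "\<And>y h. y \<in> cball (lbar i, lbar j, lbar k, 0) r \<Longrightarrow> c0 * norm h ^ 2 \<le> shape_strain i j k y h"
    using rest_shape_uniform_bounds[OF dis rest] by blast
  define K where "K = 1 + 4 * M / r + M / P0 + 192 * M / (m0 * c0)"
  have K: "K \<ge> 1" "4 * M \<le> K * r" "M \<le> K * P0" "192 * M \<le> K * (m0 * c0)"
    using pos r by (auto simp: K_def field_simps)
  show ?thesis
  proof (rule that)
    fix ks knp :: real assume kk: "K < ks" "K < knp"
    have Kmin: "K \<le> min ks knp" using kk by simp
    have ks: "ks > 0" "4 * M \<le> r * ks" and knp: "knp > 0" "4 * M \<le> r * knp"
      using kk K mult_right_mono[OF less_imp_le[OF kk(1)] less_imp_le[OF r]]
        mult_right_mono[OF less_imp_le[OF kk(2)] less_imp_le[OF r]]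
      by (simp_all add: mult.commute)
    obtain y where yc: "y \<in> cball (lbar i, lbar j, lbar k, 0) r"
      and fp: "shape_update ks knp (lbar i) (lbar j) (lbar k) y = y"
      using shape_update_has_fixpoint[of "lbar i" "lbar j" "lbar k" r M ks knp] bounds r ks knp by blast
    note b = bounds[OF yc]
    have "M < knp * P0" using K(3) mult_strict_right_mono[OF kk(2) pos(3)] by linarith
    also have "\<dots> \<le> knp * Pkz y" using b knp by (simp add: mult_left_mono)
    finally have apex: "wi y < knp * Pkz y" using b by linarith
    have "K * (m0 * c0) \<le> min ks knp * (m0 * c0)"
      by (rule mult_right_mono[OF Kmin]) (use pos in simp)
    then have "192 * M \<le> min ks knp * (m0 * c0)" using K(4) by linarith
    then have "192 * M \<le> min ks knp * c0 * m0" by (simp add: algebra_simps)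
    then have "stiff_equilibrium ks knp lbar i j k (shape_config i j k (- wi y / knp) y)"
      using b by (intro stiff_equilibrium_shape_config[OF dis _ fp ks(1) knp(1) _ _ apex pos(2) _ _ _ _ _ _
          pos(4) strain[OF yc]]) simp_all
    then show "\<exists>i j k q. stiff_equilibrium ks knp lbar i j k q" by blast
  qed
qed

theorem proposition7:
  fixes lbar :: "3 \<Rightarrow> real" and \<nu>s \<nu>ns \<nu>db :: real
  assumes "lbar 1 > 0" "lbar 2 > 0" "lbar 3 > 0"
    and "lbar 1 < lbar 2 + lbar 3" "lbar 2 < lbar 1 + lbar 3" "lbar 3 < lbar 1 + lbar 2"
    and "\<nu>s > 0" "\<nu>ns > 0" "\<nu>db > 0"
  shows "\<exists>K. \<forall>\<kappa>s \<kappa>np. \<kappa>s > K \<and> \<kappa>np > K \<longrightarrow>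
           (\<exists>p. nondeg_local_min (Uhat \<kappa>s \<kappa>np lbar) Qred p \<and>
                (\<forall>q\<in>Qspace. proj q = p \<longrightarrow>
                    (\<forall>v. v \<noteq> 0 \<longrightarrow> R_total \<nu>s \<nu>ns \<nu>db q v > 0)))"
proof -
  obtain K where K: "\<And>ks knp. K < ks \<Longrightarrow> K < knp \<Longrightarrow> \<exists>i j k q. stiff_equilibrium ks knp lbar i j k q"
    using stiff_equilibria_exist[OF assms(1-6)] by blast
  have "\<exists>p. nondeg_local_min (Uhat ks knp lbar) Qred p \<and>
      (\<forall>q\<in>Qspace. proj q = p \<longrightarrow> (\<forall>v. v \<noteq> 0 \<longrightarrow> R_total \<nu>s \<nu>ns \<nu>db q v > 0))"
    if large: "K < ks" "K < knp" for ks knp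
  proof -
    obtain i j k q where eq: "stiff_equilibrium ks knp lbar i j k q" using K[OF large] by blast
    show ?thesis
      using stiff_equilibrium_nondeg_local_min[OF eq]
        stiff_equilibrium_fiber_R_total_pos[OF eq _ assms(7-9)] by blast
  qed
  then show ?thesis by blast
qed

end
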